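(* Let $\Xi\to C$ be a sequent without stoups (regarded, in the context of $\mathcal{M}'_{2015}$, as a sequent all of whose stoups are empty). Then the following are equivalent: (1) $\Xi\to C$ is derivable in $\mathcal{F}_{2015}$ without cut; (2) $\Xi\to C$ is derivable in $\mathcal{F}_{2015}$, possibly using cut; (3) $\Xi\to C$ is derivable in $\mathcal{M}'_{2015}$ extended with the stoup cut rule; (4) $\Xi\to C$ is derivable in $\mathcal{M}'_{2015}$ (without cut).
   Context: Formulae are built from a countable set of variables and $\mathbf1$ by $\backslash,/,\cdot,\wedge,\vee$ and the unary $\langle\rangle$, $[]^{-1}$, $!$. Calculi with stoups: a stoup is a finite multiset of formulae ($\varnothing$ empty); a tree term is a formula or $[\Xi]$; a meta-formula is $\zeta;\Gamma$ ($\zeta$ a stoup, $\Gamma$ a finite sequence of tree terms, empty $\Lambda$), $\varnothing;\Gamma$ written $\Gamma$; comma is concatenation / multiset union; sequents $\Xi\to C$; $\Xi(\Theta)$ designates an occurrence of a meta-formula $\Theta$ which is $\Xi$ itself or the content of a bracket $[\Theta]$ at any depth. Rules of $\mathcal{M}'_{2015}$: axioms $A\to A$, $\Lambda\to\mathbf1$; ($/L$) from $\zeta_1;\Gamma\to B$ and $\Xi(\zeta_2;\Delta_1,C,\Delta_2)\to D$ infer $\Xi(\zeta_1,\zeta_2;\Delta_1,C/B,\Gamma,\Delta_2)\to D$; ($/R$) from $\zeta;\Gamma,B\to C$ infer $\zeta;\Gamma\to C/B$; ($\backslash L$) from $\zeta_1;\Gamma\to A$ and $\Xi(\zeta_2;\Delta_1,C,\Delta_2)\to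 D$ infer $\Xi(\zeta_1,\zeta_2;\Delta_1,\Gamma,A\backslash C,\Delta_2)\to D$; ($\backslash R$) from $\zeta;A,\Gamma\to C$ infer $\zeta;\Gamma\to A\backslash C$; ($\cdot L$) from $\Xi(\zeta;\Delta_1,A,B,\Delta_2)\to D$ infer $\Xi(\zeta;\Delta_1,A\cdot B,\Delta_2)\to D$; ($\cdot R$) from $\zeta_1;\Delta\to A$, $\zeta_2;\Gamma\to B$ infer $\zeta_1,\zeta_2;\Delta,\Gamma\to A\cdot B$; ($\mathbf1L$) from $\Xi(\zeta;\Delta_1,\Delta_2)\to A$ infer $\Xi(\zeta;\Delta_1,\mathbf1,\Delta_2)\to A$; ($\vee L$) from $\Xi(\zeta;\Delta_1,A_1,\Delta_2)\to C$ and $\Xi(\zeta;\Delta_1,A_2,\Delta_2)\to C$ infer $\Xi(\zeta;\Delta_1,A_1\vee A_2,\Delta_2)\to C$; ($\vee R_i$) from $\Xi\to A_i$ infer $\Xi\to A_1\vee A_2$; ($\wedge L_i$) from $\Xi(\zeta;\Delta_1,A_i,\Delta_2)\to C$ infer $\Xi(\zeta;\Delta_1,A_1\wedge A_2,\Delta_2)\to C$; ($\wedge R$) from $\Xi\to A_1$ and $\Xi\to A_2$ infer $\Xi\to A_1\wedge A_2$; ($[]^{-1}L$) from $\Xi(\zeta;\Delta_1,A,\Delta_2)\to B$ infer $\Xi(\zeta;\Delta_1,[[]^{-1}A],\Delta_2)\to B$; ($[]^{-1}R$) from $[\Xi]\to A$ infer $\Xi\to[]^{-1}A$; ($\langle\rangle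 L$) from $\Xi(\zeta;\Delta_1,[A],\Delta_2)\to B$ infer $\Xi(\zeta;\Delta_1,\langle\rangle A,\Delta_2)\to B$; ($\langle\rangle R$) from $\Xi\to A$ infer $[\Xi]\to\langle\rangle A$; ($!L$) from $\Xi(\zeta,A;\Gamma_1,\Gamma_2)\to B$ infer $\Xi(\zeta;\Gamma_1,!A,\Gamma_2)\to B$; ($!P$) from $\Xi(\zeta;\Gamma_1,A,\Gamma_2)\to B$ infer $\Xi(\zeta,A;\Gamma_1,\Gamma_2)\to B$; ($!R'$) from $\zeta;\Lambda\to B$ infer $\zeta;\Lambda\to!B$, if $\zeta\ne\varnothing$; ($!C'$) from $\Xi(\zeta_1,\zeta_2;\Gamma_1,[\zeta',\zeta_2;\Gamma_2],\Gamma_3)\to C$ infer $\Xi(\zeta_1,\zeta_2,\zeta';\Gamma_1,\Gamma_2,\Gamma_3)\to C$, if $\zeta_2\ne\varnothing$. The stoup cut rule is: from $\xi;\Pi\to A$ and $\Xi(\zeta;\Gamma_1,A,\Gamma_2)\to C$ infer $\Xi(\xi,\zeta;\Gamma_1,\Pi,\Gamma_2)\to C$. Stoup-free calculus $\mathcal{F}_{2015}$: meta-formulae are finite sequences of tree terms; rules are the stoup-free versions of the rules above other than $!L,!P,!R',!C'$ (drop all stoups), together with ($!L$) from $\Xi(\Delta_1,A,\Delta_2)\to C$ infer $\Xi(\Delta_1,!A,\Delta_2)\to C$; ($!P_1$) from $\Xi(\Delta_1,!A,\Phi,\Delta_2)\to C$ infer $\Xi(\Delta_1,\Phi,!A,\Delta_2)\to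 C$; ($!P_2$) the converse; ($!R$) from $!A_1,\dots,!A_n\to B$ infer $!A_1,\dots,!A_n\to!B$ ($n\ge1$); ($!C$) from $\Xi(!A_1,\dots,!A_n,\Gamma_1,[!A_1,\dots,!A_n,\Gamma_2],\Gamma_3)\to C$ infer $\Xi(!A_1,\dots,!A_n,\Gamma_1,\Gamma_2,\Gamma_3)\to C$ ($n\geq1$); and the cut rule: from $\Pi\to A$ and $\Xi(\Gamma_1,A,\Gamma_2)\to C$ infer $\Xi(\Gamma_1,\Pi,\Gamma_2)\to C$. *)

theory Defs
  imports Main "HOL-Library.Multiset"
begin

text \<open>Under A C is A\C, Over C B is C/B, Box A is []^{-1}A, Diam A is the diamond, Bang A is !A.\<close>
datatype fm = Var nat | One | Under fm fm | Over fm fm | Prod fm fm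
  | Meet fm fm | Join fm fm | Diam fm | Box fm | Bang fm

datatype tt = F fm | Br "tt list"

text \<open>Contexts: Xi(Theta) designates Theta as Xi itself or the full content of a bracket at any depth.\<close>
datatype ctx = Hole | In "tt list" ctx "tt list"

primrec plug :: "ctx \<Rightarrow> tt list \<Rightarrow> tt list" where
  "plug Hole T = T"
| "plug (In G1 c G2) T = G1 @ [Br (plug c T)] @ G2"

definition bangs :: "fm list \<Rightarrow> tt list" where
  "bangs As = map (\<lambda>A. F (Bang A)) As"

inductive Fd :: "bool \<Rightarrow> tt list \<Rightarrow> fm \<Rightarrow> bool" for cut :: bool where
  ax: "Fd cut [F A] A"
| oneR: "Fd cut [] One"
| overL: "Fd cut G B \<Longrightarrow> Fd cut (plug c (D1 @ [F C] @ D2)) D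
          \<Longrightarrow> Fd cut (plug c (D1 @ [F (Over C B)] @ G @ D2)) D"
| overR: "Fd cut (G @ [F B]) C \<Longrightarrow> Fd cut G (Over C B)"
| underL: "Fd cut G A \<Longrightarrow> Fd cut (plug c (D1 @ [F C] @ D2)) D
          \<Longrightarrow> Fd cut (plug c (D1 @ G @ [F (Under A C)] @ D2)) D"
| underR: "Fd cut (F A # G) C \<Longrightarrow> Fd cut G (Under A C)"
| prodL: "Fd cut (plug c (D1 @ [F A, F B] @ D2)) D \<Longrightarrow> Fd cut (plug c (D1 @ [F (Prod A B)] @ D2)) D"
| prodR: "Fd cut D A \<Longrightarrow> Fd cut G B \<Longrightarrow> Fd cut (D @ G) (Prod A B)"
| oneL: "Fd cut (plug c (D1 @ D2)) A \<Longrightarrow> Fd cut (plug c (D1 @ [F One] @ D2)) A"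
| joinL: "Fd cut (plug c (D1 @ [F A1] @ D2)) C \<Longrightarrow> Fd cut (plug c (D1 @ [F A2] @ D2)) C
          \<Longrightarrow> Fd cut (plug c (D1 @ [F (Join A1 A2)] @ D2)) C"
| joinR1: "Fd cut X A1 \<Longrightarrow> Fd cut X (Join A1 A2)"
| joinR2: "Fd cut X A2 \<Longrightarrow> Fd cut X (Join A1 A2)"
| meetL1: "Fd cut (plug c (D1 @ [F A1] @ D2)) C \<Longrightarrow> Fd cut (plug c (D1 @ [F (Meet A1 A2)] @ D2)) C"
| meetL2: "Fd cut (plug c (D1 @ [F A2] @ D2)) C \<Longrightarrow> Fd cut (plug c (D1 @ [F (Meet A1 A2)] @ D2)) C"
| meetR: "Fd cut X A1 \<Longrightarrow> Fd cut X A2 \<Longrightarrow> Fd cut X (Meet A1 A2)"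
| boxL: "Fd cut (plug c (D1 @ [F A] @ D2)) B \<Longrightarrow> Fd cut (plug c (D1 @ [Br [F (Box A)]] @ D2)) B"
| boxR: "Fd cut [Br X] A \<Longrightarrow> Fd cut X (Box A)"
| diamL: "Fd cut (plug c (D1 @ [Br [F A]] @ D2)) B \<Longrightarrow> Fd cut (plug c (D1 @ [F (Diam A)] @ D2)) B"
| diamR: "Fd cut X A \<Longrightarrow> Fd cut [Br X] (Diam A)"
| bangL: "Fd cut (plug c (D1 @ [F A] @ D2)) C \<Longrightarrow> Fd cut (plug c (D1 @ [F (Bang A)] @ D2)) C"
| bangP1: "Fd cut (plug c (D1 @ [F (Bang A)] @ P @ D2)) C \<Longrightarrow> Fd cut (plug c (D1 @ P @ [F (Bang A)] @ D2)) C"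
| bangP2: "Fd cut (plug c (D1 @ P @ [F (Bang A)] @ D2)) C \<Longrightarrow> Fd cut (plug c (D1 @ [F (Bang A)] @ P @ D2)) C"
| bangR: "As \<noteq> [] \<Longrightarrow> Fd cut (bangs As) B \<Longrightarrow> Fd cut (bangs As) (Bang B)"
| bangC: "As \<noteq> [] \<Longrightarrow> Fd cut (plug c (bangs As @ G1 @ [Br (bangs As @ G2)] @ G3)) C
          \<Longrightarrow> Fd cut (plug c (bangs As @ G1 @ G2 @ G3)) C"
| cutR: "cut \<Longrightarrow> Fd cut P A \<Longrightarrow> Fd cut (plug c (G1 @ [F A] @ G2)) C
          \<Longrightarrow> Fd cut (plug c (G1 @ P @ G2)) C"

text \<open>Tree terms with stoups: a formula, or a bracket [zeta; Gamma] around a meta-formula.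
  A meta-formula is a pair (stoup, sequence of tree terms).\<close>
datatype stt = SF fm | SBr "fm multiset" "stt list"

type_synonym mf = "fm multiset \<times> stt list"

datatype sctx = SHole | SIn "fm multiset" "stt list" sctx "stt list"

text \<open>splug c z G is Xi(z; G) where (z; G) is Xi itself or the full content of a bracket.\<close>
primrec splug :: "sctx \<Rightarrow> fm multiset \<Rightarrow> stt list \<Rightarrow> mf" where
  "splug SHole z G = (z, G)"
| "splug (SIn z' G1 c G2) z G = (z', G1 @ [case_prod SBr (splug c z G)] @ G2)"

inductive Md :: "bool \<Rightarrow> mf \<Rightarrow> fm \<Rightarrow> bool" for cut :: bool where
  ax: "Md cut ({#}, [SF A]) A"
| oneR: "Md cut ({#}, []) One"
| overL: "Md cut (z1, G) B \<Longrightarrow> Md cut (splug c z2 (D1 @ [SF C] @ D2)) D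
          \<Longrightarrow> Md cut (splug c (z1 + z2) (D1 @ [SF (Over C B)] @ G @ D2)) D"
| overR: "Md cut (z, G @ [SF B]) C \<Longrightarrow> Md cut (z, G) (Over C B)"
| underL: "Md cut (z1, G) A \<Longrightarrow> Md cut (splug c z2 (D1 @ [SF C] @ D2)) D
          \<Longrightarrow> Md cut (splug c (z1 + z2) (D1 @ G @ [SF (Under A C)] @ D2)) D"
| underR: "Md cut (z, SF A # G) C \<Longrightarrow> Md cut (z, G) (Under A C)"
| prodL: "Md cut (splug c z (D1 @ [SF A, SF B] @ D2)) D \<Longrightarrow> Md cut (splug c z (D1 @ [SF (Prod A B)] @ D2)) D"
| prodR: "Md cut (z1, D) A \<Longrightarrow> Md cut (z2, G) B \<Longrightarrow> Md cut (z1 + z2, D @ G) (Prod A B)"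
| oneL: "Md cut (splug c z (D1 @ D2)) A \<Longrightarrow> Md cut (splug c z (D1 @ [SF One] @ D2)) A"
| joinL: "Md cut (splug c z (D1 @ [SF A1] @ D2)) C \<Longrightarrow> Md cut (splug c z (D1 @ [SF A2] @ D2)) C
          \<Longrightarrow> Md cut (splug c z (D1 @ [SF (Join A1 A2)] @ D2)) C"
| joinR1: "Md cut X A1 \<Longrightarrow> Md cut X (Join A1 A2)"
| joinR2: "Md cut X A2 \<Longrightarrow> Md cut X (Join A1 A2)"
| meetL1: "Md cut (splug c z (D1 @ [SF A1] @ D2)) C \<Longrightarrow> Md cut (splug c z (D1 @ [SF (Meet A1 A2)] @ D2)) C"
| meetL2: "Md cut (splug c z (D1 @ [SF A2] @ D2)) C \<Longrightarrow> Md cut (splug c z (D1 @ [SF (Meet A1 A2)] @ D2)) C"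
| meetR: "Md cut X A1 \<Longrightarrow> Md cut X A2 \<Longrightarrow> Md cut X (Meet A1 A2)"
| boxL: "Md cut (splug c z (D1 @ [SF A] @ D2)) B
          \<Longrightarrow> Md cut (splug c z (D1 @ [SBr {#} [SF (Box A)]] @ D2)) B"
| boxR: "Md cut ({#}, [case_prod SBr X]) A \<Longrightarrow> Md cut X (Box A)"
| diamL: "Md cut (splug c z (D1 @ [SBr {#} [SF A]] @ D2)) B \<Longrightarrow> Md cut (splug c z (D1 @ [SF (Diam A)] @ D2)) B"
| diamR: "Md cut X A \<Longrightarrow> Md cut ({#}, [case_prod SBr X]) (Diam A)"
| bangL: "Md cut (splug c (z + {#A#}) (G1 @ G2)) B \<Longrightarrow> Md cut (splug c z (G1 @ [SF (Bang A)] @ G2)) B"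
| bangP: "Md cut (splug c z (G1 @ [SF A] @ G2)) B \<Longrightarrow> Md cut (splug c (z + {#A#}) (G1 @ G2)) B"
| bangR': "z \<noteq> {#} \<Longrightarrow> Md cut (z, []) B \<Longrightarrow> Md cut (z, []) (Bang B)"
| bangC': "z2 \<noteq> {#} \<Longrightarrow> Md cut (splug c (z1 + z2) (G1 @ [SBr (z' + z2) G2] @ G3)) C
          \<Longrightarrow> Md cut (splug c (z1 + z2 + z') (G1 @ G2 @ G3)) C"
| cutR: "cut \<Longrightarrow> Md cut (x, P) A \<Longrightarrow> Md cut (splug c z (G1 @ [SF A] @ G2)) C
          \<Longrightarrow> Md cut (splug c (x + z) (G1 @ P @ G2)) C"

primrec emb :: "tt \<Rightarrow> stt" where
  "emb (F A) = SF A"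
| "emb (Br G) = SBr {#} (map emb G)"

end

theory Submission
  imports Defs
begin

text \<open>(1) \<open>\<Longrightarrow>\<close> (2) and (4) \<open>\<Longrightarrow>\<close> (3) are trivial.

  (2) \<open>\<Longrightarrow>\<close> (1) is cut elimination for \<open>F\<^sub>2\<^sub>0\<^sub>1\<^sub>5\<close>, by induction on the cut
  formula \<open>A\<close> and then on the derivation of the left premise \<open>P \<rightarrow> A\<close>. Cuts are pushed up
  through left rules until \<open>A\<close> is introduced on the right; then every occurrence of \<open>A\<close> in
  the right premise is replaced by \<open>P\<close> simultaneously, so that the duplication of banged
  formulas by \<open>!C\<close> does no harm, and principal occurrences reduce to cuts on subformulas.

  (3) \<open>\<Longrightarrow>\<close> (2): erasing the stoups, i.e. writing the stoup \<open>\<zeta>\<close> of each meta-formula as a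
  prefix \<open>!\<zeta>\<close>, turns every rule of \<open>M'\<^sub>2\<^sub>0\<^sub>1\<^sub>5\<close>, stoup cut included, into a rule
  of \<open>F\<^sub>2\<^sub>0\<^sub>1\<^sub>5\<close> up to permutations by \<open>!P\<close>.

  (1) \<open>\<Longrightarrow>\<close> (4) is an induction on cut-free \<open>F\<^sub>2\<^sub>0\<^sub>1\<^sub>5\<close>-derivations, proved at once for
  every way of moving banged formulas into the stoups; this generality turns \<open>!R\<close> into \<open>!R'\<close>
  with everything in the stoup followed by \<open>!L\<close>, and \<open>!C\<close> into \<open>!C'\<close>.\<close>

lemma Fd_cut_free_imp_Fd: "Fd False X C \<Longrightarrow> Fd b X C"
  by (induction rule: Fd.induct) (blast intro: Fd.intros)+

lemma Md_cut_free_imp_Md: "Md False X C \<Longrightarrow> Md b X C"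
  by (induction rule: Md.induct) (blast intro: Md.intros)+

primrec ctx_comp :: "ctx \<Rightarrow> ctx \<Rightarrow> ctx" where
  "ctx_comp Hole d = d"
| "ctx_comp (In G1 c G2) d = In G1 (ctx_comp c d) G2"

lemma plug_ctx_comp: "plug (ctx_comp c d) Y = plug c (plug d Y)"
  by (induction c) auto

lemma plug_Br_eq_plug_ctx_comp: "plug c (D1 @ Br Y # D2) = plug (ctx_comp c (In D1 Hole D2)) Y"
  by (simp add: plug_ctx_comp)

lemma plug_in_plug:
  obtains c' L R where "\<And>Y. plug c (G1 @ plug d (D1 @ Y @ D2) @ G2) = plug c' (L @ Y @ R)"
proof (cases d)
  case Hole
  then show ?thesis by (intro that[of c "G1 @ D1" "D2 @ G2"]) simp
next
  case (In H1 d' H2)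
  then show ?thesis
    by (intro that[of "ctx_comp c (In (G1 @ H1) d' (H2 @ G2))" D1 D2]) (simp add: plug_ctx_comp)
qed

lemma Fd_rule_in_plug:
  assumes rule: "\<And>c D1 D2. Fd b (plug c (D1 @ M @ D2)) X \<Longrightarrow> Fd b (plug c (D1 @ M' @ D2)) X"
    and "Fd b (plug c (G1 @ plug d (D1 @ M @ D2) @ G2)) X"
  shows "Fd b (plug c (G1 @ plug d (D1 @ M' @ D2) @ G2)) X"
proof -
  obtain c' L R where eq: "\<And>Y. plug c (G1 @ plug d (D1 @ Y @ D2) @ G2) = plug c' (L @ Y @ R)"
    using plug_in_plug[of c G1 d D1 D2 G2] by blast
  show ?thesis using rule[of c' L R] assms(2) unfolding eq .
qed

lemma bangs_simps [simp]:
  "bangs [] = []"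
  "bangs (A # As) = F (Bang A) # bangs As"
  "bangs (As @ Bs) = bangs As @ bangs Bs"
  by (simp_all add: bangs_def)

lemma Fd_bangs_move_right:
  "Fd b (plug c (D1 @ bangs As @ P @ D2)) C \<Longrightarrow> Fd b (plug c (D1 @ P @ bangs As @ D2)) C"
proof (induction As arbitrary: D1 D2)
  case (Cons A As)
  from Cons.prems have "Fd b (plug c ((D1 @ [F (Bang A)]) @ bangs As @ P @ D2)) C" by simp
  from Cons.IH[OF this] have "Fd b (plug c (D1 @ [F (Bang A)] @ P @ (bangs As @ D2))) C" by simp
  from Fd.bangP1[OF this] show ?case by simp
qed simp

lemma Fd_bangs_move_left:
  "Fd b (plug c (D1 @ P @ bangs As @ D2)) C \<Longrightarrow> Fd b (plug c (D1 @ bangs As @ P @ D2)) C"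
proof (induction As arbitrary: D1 D2)
  case (Cons A As)
  from Cons.prems have "Fd b (plug c (D1 @ P @ [F (Bang A)] @ (bangs As @ D2))) C" by simp
  from Fd.bangP2[OF this] have "Fd b (plug c ((D1 @ [F (Bang A)]) @ P @ bangs As @ D2)) C" by simp
  from Cons.IH[OF this] show ?case by simp
qed simp

lemma Fd_bangs_perm:
  "mset As = mset Bs \<Longrightarrow> Fd b (plug c (D1 @ bangs As @ D2)) C \<Longrightarrow> Fd b (plug c (D1 @ bangs Bs @ D2)) C"
proof (induction As arbitrary: Bs D1 D2)
  case (Cons A As)
  have "A \<in> set Bs" using Cons.prems(1) by (metis list.set_intros(1) set_mset_mset)
  then obtain Bs1 Bs2 where Bs: "Bs = Bs1 @ A # Bs2" by (metis split_list)
  have "mset As = mset (Bs1 @ Bs2)" using Cons.prems(1) Bs by simp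
  moreover from Cons.prems(2) have "Fd b (plug c ((D1 @ [F (Bang A)]) @ bangs As @ D2)) C" by simp
  ultimately have "Fd b (plug c ((D1 @ [F (Bang A)]) @ bangs (Bs1 @ Bs2) @ D2)) C" by (rule Cons.IH)
  then have "Fd b (plug c (D1 @ bangs [A] @ bangs Bs1 @ (bangs Bs2 @ D2))) C" by simp
  from Fd_bangs_move_right[OF this] show ?case using Bs by simp
qed simp

section \<open>Cut elimination for \<open>F\<^sub>2\<^sub>0\<^sub>1\<^sub>5\<close>\<close>

inductive replaces :: "fm \<Rightarrow> tt list \<Rightarrow> tt list \<Rightarrow> tt list \<Rightarrow> bool" for A P where
  Nil: "replaces A P [] []"
| replace: "replaces A P T T' \<Longrightarrow> replaces A P (F A # T) (P @ T')"
| keep: "replaces A P T T' \<Longrightarrow> replaces A P (F B # T) (F B # T')"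
| Br: "replaces A P X X' \<Longrightarrow> replaces A P T T' \<Longrightarrow> replaces A P (Br X # T) (Br X' # T')"

inductive replaces_ctx :: "fm \<Rightarrow> tt list \<Rightarrow> ctx \<Rightarrow> ctx \<Rightarrow> bool" for A P where
  Hole: "replaces_ctx A P Hole Hole"
| In: "replaces A P G1 G1' \<Longrightarrow> replaces_ctx A P c c' \<Longrightarrow> replaces A P G2 G2'
    \<Longrightarrow> replaces_ctx A P (In G1 c G2) (In G1' c' G2')"

lemma replaces_refl: "replaces A P T T"
proof (induction "size_list size T" arbitrary: T rule: less_induct)
  case less
  show ?case
  proof (cases T)
    case (Cons t T0)
    then show ?thesis using less by (cases t) (auto intro: replaces.intros)
  qed (simp add: replaces.Nil)
qed

lemma replaces_ctx_refl: "replaces_ctx A P c c"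
  by (induction c) (auto intro: replaces_ctx.intros replaces_refl)

lemma replaces_append: "replaces A P X X' \<Longrightarrow> replaces A P Y Y' \<Longrightarrow> replaces A P (X @ Y) (X' @ Y')"
  by (induction rule: replaces.induct) (auto intro: replaces.intros)

lemma replaces_NilD: "replaces A P [] T' \<Longrightarrow> T' = []"
  by (erule replaces.cases) auto

lemma replaces_append_split:
  "replaces A P (X @ Y) T' \<Longrightarrow> \<exists>X' Y'. T' = X' @ Y' \<and> replaces A P X X' \<and> replaces A P Y Y'"
proof (induction X arbitrary: T')
  case Nil
  then show ?case using replaces.Nil by fastforce
next
  case (Cons t X)
  from Cons.prems have "replaces A P (t # X @ Y) T'" by simp
  then show ?case
  proof (cases rule: replaces.cases)
    case (replace T'')
    with Cons.IH obtain X' Y' where "T'' = X' @ Y'" "replaces A P X X'" "replaces A P Y Y'" by blast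
    with replace show ?thesis
      by (intro exI[of _ "P @ X'"] exI[of _ Y']) (auto intro: replaces.replace)
  next
    case (keep T'' B)
    with Cons.IH obtain X' Y' where "T'' = X' @ Y'" "replaces A P X X'" "replaces A P Y Y'" by blast
    with keep show ?thesis by (intro exI[of _ "F B # X'"] exI[of _ Y']) (auto intro: replaces.keep)
  next
    case (Br Z Z' T'')
    with Cons.IH obtain X' Y' where "T'' = X' @ Y'" "replaces A P X X'" "replaces A P Y Y'" by blast
    with Br show ?thesis by (intro exI[of _ "Br Z' # X'"] exI[of _ Y']) (auto intro: replaces.Br)
  qed
qed

lemma replaces_appendE:
  assumes "replaces A P (X @ Y) T'"
  obtains X' Y' where "T' = X' @ Y'" "replaces A P X X'" "replaces A P Y Y'"
  using replaces_append_split[OF assms] by blast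

lemma replaces_FD: "replaces A P [F B] T' \<Longrightarrow> T' = [F B] \<or> B = A \<and> T' = P"
  by (erule replaces.cases) (auto dest: replaces_NilD)

lemma replaces_BrE:
  assumes "replaces A P [Br X] T'"
  obtains X' where "T' = [Br X']" "replaces A P X X'"
  using assms by (cases rule: replaces.cases) (auto dest: replaces_NilD)

lemma replaces_plug:
  "replaces_ctx A P c c' \<Longrightarrow> replaces A P X X' \<Longrightarrow> replaces A P (plug c X) (plug c' X')"
  by (induction rule: replaces_ctx.induct) (auto intro!: replaces_append replaces.intros)

lemma replaces_occurrence: "replaces A P (plug c (G1 @ [F A] @ G2)) (plug c (G1 @ P @ G2))"
proof -
  have "replaces A P [F A] P" using replaces.replace[OF replaces.Nil] by simp
  then have "replaces A P (G1 @ [F A] @ G2) (G1 @ P @ G2)"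
    by (intro replaces_append replaces_refl)
  then show ?thesis by (rule replaces_plug[OF replaces_ctx_refl])
qed

lemma replaces_plug_split:
  "replaces A P (plug c X) T' \<Longrightarrow> \<exists>c' X'. T' = plug c' X' \<and> replaces_ctx A P c c' \<and> replaces A P X X'"
proof (induction c arbitrary: T')
  case Hole
  then show ?case by (intro exI[of _ Hole] exI[of _ T']) (simp add: replaces_ctx.Hole)
next
  case (In G1 c G2)
  from In.prems have "replaces A P (G1 @ [Br (plug c X)] @ G2) T'" by simp
  then obtain G1' Y G2' where T': "T' = G1' @ Y @ G2'" and G1: "replaces A P G1 G1'"
    and Y: "replaces A P [Br (plug c X)] Y" and G2: "replaces A P G2 G2'"
    by (metis replaces_appendE)
  from Y obtain Z where Z: "Y = [Br Z]" and "replaces A P (plug c X) Z" by (rule replaces_BrE)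
  with In.IH obtain c' X' where "Z = plug c' X'" "replaces_ctx A P c c'" "replaces A P X X'"
    by blast
  with T' Z G1 G2 show ?case
    by (intro exI[of _ "In G1' c' G2'"] exI[of _ X']) (simp add: replaces_ctx.In)
qed

lemma replaces_plug_appendE [consumes 1, case_names decomp]:
  assumes "replaces A P (plug c (D1 @ M @ D2)) T'"
  obtains c' D1' M' D2' where "T' = plug c' (D1' @ M' @ D2')" "replaces A P M M'"
    "\<And>Z Z'. replaces A P Z Z' \<Longrightarrow> replaces A P (plug c (D1 @ Z @ D2)) (plug c' (D1' @ Z' @ D2'))"
proof -
  obtain c' X' where T': "T' = plug c' X'" and c: "replaces_ctx A P c c'"
    and X': "replaces A P (D1 @ M @ D2) X'"
    using replaces_plug_split[OF assms] by blast
  obtain D1' M' D2' where "X' = D1' @ M' @ D2'" "replaces A P D1 D1'" "replaces A P M M'"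
    "replaces A P D2 D2'"
    using X' by (metis replaces_appendE)
  with T' c show thesis by (intro that) (auto intro!: replaces_plug replaces_append)
qed

lemma replaces_plug_FE [consumes 1, case_names decomp]:
  assumes "replaces A P (plug c (D1 @ [F B] @ D2)) T'"
  obtains c' D1' D2' where "\<And>Z. replaces A P (plug c (D1 @ Z @ D2)) (plug c' (D1' @ Z @ D2'))"
    and "T' = plug c' (D1' @ [F B] @ D2') \<or> B = A \<and> T' = plug c' (D1' @ P @ D2')"
proof -
  obtain c' D1' M' D2' where T': "T' = plug c' (D1' @ M' @ D2')" and M': "replaces A P [F B] M'"
    and ctx: "\<And>Z Z'. replaces A P Z Z'
        \<Longrightarrow> replaces A P (plug c (D1 @ Z @ D2)) (plug c' (D1' @ Z' @ D2'))"
    using replaces_plug_appendE[OF assms] by blast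
  show thesis using that[OF ctx[OF replaces_refl]] replaces_FD[OF M'] T' by auto
qed

text \<open>A banged formula is only ever replaced by the antecedent of an \<open>!R\<close>, a nonempty
  sequence of banged formulas; so replacement keeps the side conditions of \<open>!R\<close>, \<open>!P\<close>, \<open>!C\<close>.\<close>
lemma replaces_bangs:
  assumes "replaces A P (bangs As) T'" and "\<forall>B. A = Bang B \<longrightarrow> (\<exists>Bs. P = bangs Bs \<and> Bs \<noteq> [])"
  shows "\<exists>As'. T' = bangs As' \<and> (As \<noteq> [] \<longrightarrow> As' \<noteq> [])"
  using assms(1)
proof (induction As arbitrary: T')
  case Nil
  then have "T' = bangs []" by (simp add: replaces_NilD)
  then show ?case by blast
next
  case (Cons B As)
  from Cons.prems obtain Y Z where T': "T' = Y @ Z" and Y: "replaces A P [F (Bang B)] Y"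
    and Z: "replaces A P (bangs As) Z"
    by (metis bangs_simps(2) append_Cons append_Nil replaces_appendE)
  obtain Zs where Zs: "Z = bangs Zs" using Cons.IH[OF Z] by blast
  from replaces_FD[OF Y] show ?case
  proof
    assume "Y = [F (Bang B)]"
    then show ?thesis using T' Zs by (intro exI[of _ "B # Zs"]) simp
  next
    assume "Bang B = A \<and> Y = P"
    then obtain Bs where "Y = bangs Bs" "Bs \<noteq> []" using assms(2) by metis
    then show ?thesis using T' Zs by (intro exI[of _ "Bs @ Zs"]) simp
  qed
qed

text \<open>The premises of a cut-free right rule concluding \<open>P \<rightarrow> A\<close>: all that a principal
  cut needs to know about its left premise.\<close>
fun right_premises :: "fm \<Rightarrow> tt list \<Rightarrow> bool" where
  "right_premises (Var n) P = False"
| "right_premises One P = (P = [])"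
| "right_premises (Over C B) P = Fd False (P @ [F B]) C"
| "right_premises (Under B C) P = Fd False (F B # P) C"
| "right_premises (Prod B C) P = (\<exists>P1 P2. P = P1 @ P2 \<and> Fd False P1 B \<and> Fd False P2 C)"
| "right_premises (Meet B C) P = (Fd False P B \<and> Fd False P C)"
| "right_premises (Join B C) P = (Fd False P B \<or> Fd False P C)"
| "right_premises (Diam B) P = (\<exists>X. P = [Br X] \<and> Fd False X B)"
| "right_premises (Box B) P = Fd False [Br P] B"
| "right_premises (Bang B) P = (\<exists>Bs. Bs \<noteq> [] \<and> P = bangs Bs \<and> Fd False (bangs Bs) B)"

definition cut_admissible :: "fm \<Rightarrow> bool" where
  "cut_admissible A \<longleftrightarrow> (\<forall>P c G1 G2 D. Fd False P A \<longrightarrow> Fd False (plug c (G1 @ [F A] @ G2)) D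
      \<longrightarrow> Fd False (plug c (G1 @ P @ G2)) D)"

lemma cut_admissibleD:
  "cut_admissible A \<Longrightarrow> Fd False P A \<Longrightarrow> Fd False (plug c (G1 @ [F A] @ G2)) D
    \<Longrightarrow> Fd False (plug c (G1 @ P @ G2)) D"
  unfolding cut_admissible_def by blast

lemma cut_admissible_top:
  "cut_admissible A \<Longrightarrow> Fd False P A \<Longrightarrow> Fd False (G1 @ [F A] @ G2) D \<Longrightarrow> Fd False (G1 @ P @ G2) D"
  using cut_admissibleD[of A P Hole] by simp

lemma principal_cut_Over:
  assumes "cut_admissible B" "cut_admissible C" "right_premises (Over C B) P"
    and "Fd False G B" "Fd False (plug c (D1 @ [F C] @ D2)) D"
  shows "Fd False (plug c (D1 @ (P @ G) @ D2)) D"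
proof -
  from assms(3) have "Fd False (P @ [F B] @ []) C" by simp
  from cut_admissible_top[OF assms(1,4) this] have "Fd False (P @ G) C" by simp
  from cut_admissibleD[OF assms(2) this assms(5)] show ?thesis .
qed

lemma principal_cut_Under:
  assumes "cut_admissible A" "cut_admissible C" "right_premises (Under A C) P"
    and "Fd False G A" "Fd False (plug c (D1 @ [F C] @ D2)) D"
  shows "Fd False (plug c (D1 @ (G @ P) @ D2)) D"
proof -
  from assms(3) have "Fd False ([] @ [F A] @ P) C" by simp
  from cut_admissible_top[OF assms(1,4) this] have "Fd False (G @ P) C" by simp
  from cut_admissibleD[OF assms(2) this assms(5)] show ?thesis .
qed

lemma principal_cut_Prod:
  assumes "cut_admissible A" "cut_admissible B" "right_premises (Prod A B) P"
    and "Fd False (plug c (D1 @ [F A, F B] @ D2)) D"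
  shows "Fd False (plug c (D1 @ P @ D2)) D"
proof -
  from assms(3) obtain P1 P2 where P: "P = P1 @ P2" and P1: "Fd False P1 A" and P2: "Fd False P2 B"
    by auto
  from assms(4) have "Fd False (plug c (D1 @ [F A] @ ([F B] @ D2))) D" by simp
  from cut_admissibleD[OF assms(1) P1 this] have "Fd False (plug c ((D1 @ P1) @ [F B] @ D2)) D"
    by simp
  from cut_admissibleD[OF assms(2) P2 this] show ?thesis using P by simp
qed

lemma principal_cut_Join:
  assumes "cut_admissible A1" "cut_admissible A2" "right_premises (Join A1 A2) P"
    and "Fd False (plug c (D1 @ [F A1] @ D2)) D" "Fd False (plug c (D1 @ [F A2] @ D2)) D"
  shows "Fd False (plug c (D1 @ P @ D2)) D"
  using assms(3) cut_admissibleD[OF assms(1) _ assms(4)] cut_admissibleD[OF assms(2) _ assms(5)]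
  by auto

lemma principal_cut_Meet:
  assumes "cut_admissible A" "A = A1 \<or> A = A2" "right_premises (Meet A1 A2) P"
    and "Fd False (plug c (D1 @ [F A] @ D2)) D"
  shows "Fd False (plug c (D1 @ P @ D2)) D"
  using assms(2,3) cut_admissibleD[OF assms(1) _ assms(4)] by auto

lemma principal_cut_Box:
  assumes "cut_admissible A" "right_premises (Box A) P" "Fd False (plug c (D1 @ [F A] @ D2)) D"
  shows "Fd False (plug c (D1 @ [Br P] @ D2)) D"
  using assms(2) cut_admissibleD[OF assms(1) _ assms(3), of "[Br P]"] by simp

lemma principal_cut_Diam:
  assumes "cut_admissible A" "right_premises (Diam A) P"
    and "Fd False (plug c (D1 @ [Br [F A]] @ D2)) D"
  shows "Fd False (plug c (D1 @ P @ D2)) D"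
proof -
  from assms(2) obtain X where P: "P = [Br X]" and X: "Fd False X A" by auto
  have "Fd False (plug (ctx_comp c (In D1 Hole D2)) ([] @ [F A] @ [])) D"
    using assms(3) by (simp add: plug_Br_eq_plug_ctx_comp)
  from cut_admissibleD[OF assms(1) X this] show ?thesis
    using P by (simp add: plug_Br_eq_plug_ctx_comp)
qed

lemma principal_cut_Bang:
  assumes "cut_admissible A" "right_premises (Bang A) P" "Fd False (plug c (D1 @ [F A] @ D2)) D"
  shows "Fd False (plug c (D1 @ P @ D2)) D"
  using assms(2) cut_admissibleD[OF assms(1) _ assms(3)] by auto

lemma Fd_replaces:
  assumes smaller: "\<forall>B. size B < size A \<longrightarrow> cut_admissible B"
    and left: "Fd False P A" and right: "right_premises A P"
  shows "Fd False T D \<Longrightarrow> replaces A P T T' \<Longrightarrow> Fd False T' D"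
proof -
  from smaller have cut: "size B < size A \<Longrightarrow> cut_admissible B" for B by blast
  from right have P_bangs: "\<forall>B. A = Bang B \<longrightarrow> (\<exists>Bs. P = bangs Bs \<and> Bs \<noteq> [])" by auto
  show "Fd False T D \<Longrightarrow> replaces A P T T' \<Longrightarrow> Fd False T' D"
  proof (induction arbitrary: T' rule: Fd.induct)
    case (ax B)
    then show ?case using left by (auto dest: replaces_FD intro: Fd.ax)
  next
    case oneR
    then show ?case by (auto dest: replaces_NilD intro: Fd.oneR)
  next
    case (overL G B c D1 C D2 D)
    from overL.prems have "replaces A P (plug c (D1 @ ([F (Over C B)] @ G) @ D2)) T'" by simp
    then show ?case
    proof (cases rule: replaces_plug_appendE)
      case (decomp c' D1' M' D2')
      from decomp(2) obtain Y G' where M': "M' = Y @ G'" and Y: "replaces A P [F (Over C B)] Y"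
        and G': "replaces A P G G'" by (rule replaces_appendE)
      have B: "Fd False G' B" by (rule overL.IH(1)[OF G'])
      have C: "Fd False (plug c' (D1' @ [F C] @ D2')) D"
        by (rule overL.IH(2)[OF decomp(3)[OF replaces_refl]])
      from replaces_FD[OF Y] show ?thesis
      proof
        assume "Over C B = A \<and> Y = P"
        then have A: "A = Over C B" and "Y = P" by auto
        have "Fd False (plug c' (D1' @ (P @ G') @ D2')) D"
          by (rule principal_cut_Over[OF cut cut right[unfolded A] B C]) (simp_all add: A)
        then show ?thesis using decomp(1) M' \<open>Y = P\<close> by simp
      qed (use Fd.overL[OF B C] decomp(1) M' in simp)
    qed
  next
    case (overR G B C)
    then show ?case by (auto intro!: Fd.overR replaces_append replaces_refl)
  next
    case (underL G A1 c D1 C D2 D)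
    from underL.prems have "replaces A P (plug c (D1 @ (G @ [F (Under A1 C)]) @ D2)) T'" by simp
    then show ?case
    proof (cases rule: replaces_plug_appendE)
      case (decomp c' D1' M' D2')
      from decomp(2) obtain G' Y where M': "M' = G' @ Y" and G': "replaces A P G G'"
        and Y: "replaces A P [F (Under A1 C)] Y" by (rule replaces_appendE)
      have A1: "Fd False G' A1" by (rule underL.IH(1)[OF G'])
      have C: "Fd False (plug c' (D1' @ [F C] @ D2')) D"
        by (rule underL.IH(2)[OF decomp(3)[OF replaces_refl]])
      from replaces_FD[OF Y] show ?thesis
      proof
        assume "Under A1 C = A \<and> Y = P"
        then have A: "A = Under A1 C" and "Y = P" by auto
        have "Fd False (plug c' (D1' @ (G' @ P) @ D2')) D"
          by (rule principal_cut_Under[OF cut cut right[unfolded A] A1 C]) (simp_all add: A)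
        then show ?thesis using decomp(1) M' \<open>Y = P\<close> by simp
      qed (use Fd.underL[OF A1 C] decomp(1) M' in simp)
    qed
  next
    case (underR A1 G C)
    then show ?case by (auto intro!: Fd.underR replaces.keep)
  next
    case (prodL c D1 A1 B1 D2 D)
    from prodL.prems show ?case
    proof (cases rule: replaces_plug_FE)
      case (decomp c' D1' D2')
      have prem: "Fd False (plug c' (D1' @ [F A1, F B1] @ D2')) D" by (rule prodL.IH[OF decomp(1)])
      from decomp(2) show ?thesis
      proof
        assume "Prod A1 B1 = A \<and> T' = plug c' (D1' @ P @ D2')"
        then have A: "A = Prod A1 B1" and T': "T' = plug c' (D1' @ P @ D2')" by auto
        show ?thesis
          unfolding T'
            by (rule principal_cut_Prod[OF cut cut right[unfolded A] prem]) (simp_all add: A)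
      qed (use Fd.prodL[OF prem] in simp)
    qed
  next
    case (prodR D0 A1 G B1)
    then show ?case by (auto elim!: replaces_appendE intro: Fd.prodR)
  next
    case (oneL c D1 D2 A1)
    from oneL.prems show ?case
    proof (cases rule: replaces_plug_FE)
      case (decomp c' D1' D2')
      have "replaces A P (plug c (D1 @ D2)) (plug c' (D1' @ D2'))" using decomp(1)[of "[]"] by simp
      then have prem: "Fd False (plug c' (D1' @ D2')) A1" by (rule oneL.IH)
      from decomp(2) show ?thesis using right Fd.oneL[OF prem] prem by auto
    qed
  next
    case (joinL c D1 A1 D2 C A2)
    from joinL.prems show ?case
    proof (cases rule: replaces_plug_FE)
      case (decomp c' D1' D2')
      have prem1: "Fd False (plug c' (D1' @ [F A1] @ D2')) C" by (rule joinL.IH(1)[OF decomp(1)])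
      have prem2: "Fd False (plug c' (D1' @ [F A2] @ D2')) C" by (rule joinL.IH(2)[OF decomp(1)])
      from decomp(2) show ?thesis
      proof
        assume "Join A1 A2 = A \<and> T' = plug c' (D1' @ P @ D2')"
        then have A: "A = Join A1 A2" and T': "T' = plug c' (D1' @ P @ D2')" by auto
        show ?thesis unfolding T'
          by (rule principal_cut_Join[OF cut cut right[unfolded A] prem1 prem2]) (simp_all add: A)
      qed (use Fd.joinL[OF prem1 prem2] in simp)
    qed
  next
    case (joinR1 X A1 A2)
    then show ?case by (auto intro: Fd.joinR1)
  next
    case (joinR2 X A2 A1)
    then show ?case by (auto intro: Fd.joinR2)
  next
    case (meetL1 c D1 A1 D2 C A2)
    from meetL1.prems show ?case
    proof (cases rule: replaces_plug_FE)
      case (decomp c' D1' D2')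
      have prem: "Fd False (plug c' (D1' @ [F A1] @ D2')) C" by (rule meetL1.IH[OF decomp(1)])
      from decomp(2) show ?thesis
      proof
        assume "Meet A1 A2 = A \<and> T' = plug c' (D1' @ P @ D2')"
        then have A: "A = Meet A1 A2" and T': "T' = plug c' (D1' @ P @ D2')" by auto
        show ?thesis unfolding T'
          by (rule principal_cut_Meet[OF cut _ right[unfolded A] prem]) (simp_all add: A)
      qed (use Fd.meetL1[OF prem] in simp)
    qed
  next
    case (meetL2 c D1 A2 D2 C A1)
    from meetL2.prems show ?case
    proof (cases rule: replaces_plug_FE)
      case (decomp c' D1' D2')
      have prem: "Fd False (plug c' (D1' @ [F A2] @ D2')) C" by (rule meetL2.IH[OF decomp(1)])
      from decomp(2) show ?thesis
      proof
        assume "Meet A1 A2 = A \<and> T' = plug c' (D1' @ P @ D2')"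
        then have A: "A = Meet A1 A2" and T': "T' = plug c' (D1' @ P @ D2')" by auto
        show ?thesis unfolding T'
          by (rule principal_cut_Meet[OF cut _ right[unfolded A] prem]) (simp_all add: A)
      qed (use Fd.meetL2[OF prem] in simp)
    qed
  next
    case (meetR X A1 A2)
    then show ?case by (auto intro: Fd.meetR)
  next
    case (boxL c D1 A1 D2 B)
    from boxL.prems show ?case
    proof (cases rule: replaces_plug_appendE)
      case (decomp c' D1' M' D2')
      from decomp(2) obtain X' where M': "M' = [Br X']" and X': "replaces A P [F (Box A1)] X'"
        by (rule replaces_BrE)
      have prem: "Fd False (plug c' (D1' @ [F A1] @ D2')) B"
        by (rule boxL.IH[OF decomp(3)[OF replaces_refl]])
      from replaces_FD[OF X'] show ?thesis
      proof
        assume "Box A1 = A \<and> X' = P"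
        then have A: "A = Box A1" and "X' = P" by auto
        have "Fd False (plug c' (D1' @ [Br P] @ D2')) B"
          by (rule principal_cut_Box[OF cut right[unfolded A] prem]) (simp add: A)
        then show ?thesis using decomp(1) M' \<open>X' = P\<close> by simp
      qed (use Fd.boxL[OF prem] decomp(1) M' in simp)
    qed
  next
    case (boxR X A1)
    then show ?case by (auto intro!: Fd.boxR replaces.Br replaces.Nil)
  next
    case (diamL c D1 A1 D2 B)
    from diamL.prems show ?case
    proof (cases rule: replaces_plug_FE)
      case (decomp c' D1' D2')
      have prem: "Fd False (plug c' (D1' @ [Br [F A1]] @ D2')) B" by (rule diamL.IH[OF decomp(1)])
      from decomp(2) show ?thesis
      proof
        assume "Diam A1 = A \<and> T' = plug c' (D1' @ P @ D2')"
        then have A: "A = Diam A1" and T': "T' = plug c' (D1' @ P @ D2')" by auto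
        show ?thesis unfolding T'
          by (rule principal_cut_Diam[OF cut right[unfolded A] prem]) (simp add: A)
      qed (use Fd.diamL[OF prem] in simp)
    qed
  next
    case (diamR X A1)
    then show ?case by (auto elim!: replaces_BrE intro: Fd.diamR)
  next
    case (bangL c D1 A1 D2 C)
    from bangL.prems show ?case
    proof (cases rule: replaces_plug_FE)
      case (decomp c' D1' D2')
      have prem: "Fd False (plug c' (D1' @ [F A1] @ D2')) C" by (rule bangL.IH[OF decomp(1)])
      from decomp(2) show ?thesis
      proof
        assume "Bang A1 = A \<and> T' = plug c' (D1' @ P @ D2')"
        then have A: "A = Bang A1" and T': "T' = plug c' (D1' @ P @ D2')" by auto
        show ?thesis unfolding T'
          by (rule principal_cut_Bang[OF cut right[unfolded A] prem]) (simp add: A)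
      qed (use Fd.bangL[OF prem] in simp)
    qed
  next
    case (bangP1 c D1 A1 P0 D2 C)
    from bangP1.prems have "replaces A P (plug c (D1 @ (P0 @ [F (Bang A1)]) @ D2)) T'" by simp
    then show ?case
    proof (cases rule: replaces_plug_appendE)
      case (decomp c' D1' M' D2')
      from decomp(2) obtain P0' Y where M': "M' = P0' @ Y" and P0': "replaces A P P0 P0'"
        and Y: "replaces A P [F (Bang A1)] Y" by (rule replaces_appendE)
      from Y have "replaces A P (bangs [A1]) Y" by simp
      then obtain Ys where Ys: "Y = bangs Ys" using replaces_bangs[OF _ P_bangs] by blast
      have "replaces A P ([F (Bang A1)] @ P0) (Y @ P0')"
        using Y P0' by (intro replaces_append) simp_all
      from decomp(3)[OF this]
      have "replaces A P (plug c (D1 @ [F (Bang A1)] @ P0 @ D2)) (plug c' (D1' @ Y @ P0' @ D2'))"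
        by simp
      from bangP1.IH[OF this] have "Fd False (plug c' (D1' @ bangs Ys @ P0' @ D2')) C"
        using Ys by simp
      from Fd_bangs_move_right[OF this] show ?thesis using decomp(1) M' Ys by simp
    qed
  next
    case (bangP2 c D1 P0 A1 D2 C)
    from bangP2.prems have "replaces A P (plug c (D1 @ ([F (Bang A1)] @ P0) @ D2)) T'" by simp
    then show ?case
    proof (cases rule: replaces_plug_appendE)
      case (decomp c' D1' M' D2')
      from decomp(2) obtain Y P0' where M': "M' = Y @ P0'" and Y: "replaces A P [F (Bang A1)] Y"
        and P0': "replaces A P P0 P0'" by (rule replaces_appendE)
      from Y have "replaces A P (bangs [A1]) Y" by simp
      then obtain Ys where Ys: "Y = bangs Ys" using replaces_bangs[OF _ P_bangs] by blast
      have "replaces A P (P0 @ [F (Bang A1)]) (P0' @ Y)"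
        using Y P0' by (intro replaces_append) simp_all
      from decomp(3)[OF this]
      have "replaces A P (plug c (D1 @ P0 @ [F (Bang A1)] @ D2)) (plug c' (D1' @ P0' @ Y @ D2'))"
        by simp
      from bangP2.IH[OF this] have "Fd False (plug c' (D1' @ P0' @ bangs Ys @ D2')) C"
        using Ys by simp
      from Fd_bangs_move_left[OF this] show ?thesis using decomp(1) M' Ys by simp
    qed
  next
    case (bangR As B)
    obtain As' where "T' = bangs As'" "As' \<noteq> []"
      using replaces_bangs[OF bangR.prems P_bangs] bangR.hyps(1) by blast
    then show ?case using bangR.IH bangR.prems by (auto intro: Fd.bangR)
  next
    case (bangC As c G1 G2 G3 C)
    obtain c' X' where T': "T' = plug c' X'" and c': "replaces_ctx A P c c'"
      and X': "replaces A P (bangs As @ G1 @ G2 @ G3) X'"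
      using replaces_plug_split[OF bangC.prems] by blast
    from X' obtain Bs G1' G2' G3' where X'_eq: "X' = Bs @ G1' @ G2' @ G3'"
      and Bs: "replaces A P (bangs As) Bs" and G1': "replaces A P G1 G1'"
      and G2': "replaces A P G2 G2'" and G3': "replaces A P G3 G3'"
      by (metis replaces_appendE)
    obtain As' where As': "Bs = bangs As'" "As' \<noteq> []"
      using replaces_bangs[OF Bs P_bangs] bangC.hyps(1) by blast
    have "replaces A P (bangs As @ G1 @ [Br (bangs As @ G2)] @ G3)
        (bangs As' @ G1' @ [Br (bangs As' @ G2')] @ G3')"
      using Bs G1' G2' G3' As' by (auto intro!: replaces_append replaces.Br replaces.Nil)
    from bangC.IH[OF replaces_plug[OF c' this]]
    have "Fd False (plug c' (bangs As' @ G1' @ [Br (bangs As' @ G2')] @ G3')) C" .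
    from Fd.bangC[OF As'(2) this] show ?case using T' X'_eq As' by simp
  next
    case (cutR P A c G1 G2 C)
    then show ?case by simp
  qed
qed

lemma cut_right_principal:
  assumes "\<forall>B. size B < size A \<longrightarrow> cut_admissible B" "Fd False P A" "right_premises A P"
    and "Fd False (plug c (G1 @ [F A] @ G2)) D"
  shows "Fd False (plug c (G1 @ P @ G2)) D"
  using Fd_replaces[OF assms(1-3) assms(4) replaces_occurrence] .

lemma cut_reduction:
  "Fd False P A \<Longrightarrow> (\<forall>B. size B < size A \<longrightarrow> cut_admissible B)
    \<Longrightarrow> Fd False (plug c (G1 @ [F A] @ G2)) D \<Longrightarrow> Fd False (plug c (G1 @ P @ G2)) D"
proof (induction arbitrary: c G1 G2 D rule: Fd.induct)
  case (ax A)
  then show ?case by simp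
next
  case oneR
  show ?case
    by (rule cut_right_principal[OF oneR.prems(1) Fd.oneR _ oneR.prems(2)]) simp_all
next
  case (overL G B c2 D1 C D2 A)
  have "Fd False (plug c' (D1' @ [F C] @ D2')) D
      \<Longrightarrow> Fd False (plug c' (D1' @ ([F (Over C B)] @ G) @ D2')) D" for c' D1' D2'
    using Fd.overL[OF overL.hyps(1)] by simp
  from Fd_rule_in_plug[OF this overL.IH(2)[OF overL.prems]] show ?case by simp
next
  case (overR G B C)
  show ?case
    by (rule cut_right_principal[OF overR.prems(1) Fd.overR[OF overR.hyps] _ overR.prems(2)])
      (simp_all add: overR.hyps)
next
  case (underL G A1 c2 D1 C D2 A)
  have "Fd False (plug c' (D1' @ [F C] @ D2')) D
      \<Longrightarrow> Fd False (plug c' (D1' @ (G @ [F (Under A1 C)]) @ D2')) D" for c' D1' D2'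
    using Fd.underL[OF underL.hyps(1)] by simp
  from Fd_rule_in_plug[OF this underL.IH(2)[OF underL.prems]] show ?case by simp
next
  case (underR A1 G C)
  show ?case
    by (rule cut_right_principal[OF underR.prems(1) Fd.underR[OF underR.hyps] _ underR.prems(2)])
      (simp_all add: underR.hyps)
next
  case (prodL c2 D1 A1 B1 D2 A)
  show ?case by (rule Fd_rule_in_plug[OF Fd.prodL prodL.IH[OF prodL.prems]])
next
  case (prodR D0 A1 G B1)
  show ?case
    by (rule cut_right_principal[OF prodR.prems(1) Fd.prodR[OF prodR.hyps] _ prodR.prems(2)])
      (use prodR.hyps in auto)
next
  case (oneL c2 D1 D2 A)
  have rule: "Fd False (plug c' (D1' @ [] @ D2')) D \<Longrightarrow> Fd False (plug c' (D1' @ [F One] @ D2')) D"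
    for c' D1' D2'
    using Fd.oneL by simp
  have "Fd False (plug c (G1 @ plug c2 (D1 @ [] @ D2) @ G2)) D" using oneL.IH[OF oneL.prems] by simp
  from Fd_rule_in_plug[OF rule this] show ?case by simp
next
  case (joinL c2 D1 A1 D2 C A2)
  obtain c' L R where eq: "\<And>Y. plug c (G1 @ plug c2 (D1 @ Y @ D2) @ G2) = plug c' (L @ Y @ R)"
    using plug_in_plug[of c G1 c2 D1 D2 G2] by blast
  show ?case
    using joinL.IH(1)[OF joinL.prems] joinL.IH(2)[OF joinL.prems] unfolding eq by (rule Fd.joinL)
next
  case (joinR1 X A1 A2)
  show ?case
    by (rule cut_right_principal[OF joinR1.prems(1) Fd.joinR1[OF joinR1.hyps] _ joinR1.prems(2)])
      (simp_all add: joinR1.hyps)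
next
  case (joinR2 X A2 A1)
  show ?case
    by (rule cut_right_principal[OF joinR2.prems(1) Fd.joinR2[OF joinR2.hyps] _ joinR2.prems(2)])
      (simp_all add: joinR2.hyps)
next
  case (meetL1 c2 D1 A1 D2 C A2)
  show ?case by (rule Fd_rule_in_plug[OF Fd.meetL1 meetL1.IH[OF meetL1.prems]])
next
  case (meetL2 c2 D1 A2 D2 C A1)
  show ?case by (rule Fd_rule_in_plug[OF Fd.meetL2 meetL2.IH[OF meetL2.prems]])
next
  case (meetR X A1 A2)
  show ?case
    by (rule cut_right_principal[OF meetR.prems(1) Fd.meetR[OF meetR.hyps] _ meetR.prems(2)])
      (simp_all add: meetR.hyps)
next
  case (boxL c2 D1 A1 D2 B)
  show ?case by (rule Fd_rule_in_plug[OF Fd.boxL boxL.IH[OF boxL.prems]])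
next
  case (boxR X A1)
  show ?case
    by (rule cut_right_principal[OF boxR.prems(1) Fd.boxR[OF boxR.hyps] _ boxR.prems(2)])
      (simp_all add: boxR.hyps)
next
  case (diamL c2 D1 A1 D2 B)
  show ?case by (rule Fd_rule_in_plug[OF Fd.diamL diamL.IH[OF diamL.prems]])
next
  case (diamR X A1)
  show ?case
    by (rule cut_right_principal[OF diamR.prems(1) Fd.diamR[OF diamR.hyps] _ diamR.prems(2)])
      (simp_all add: diamR.hyps)
next
  case (bangL c2 D1 A1 D2 C)
  show ?case by (rule Fd_rule_in_plug[OF Fd.bangL bangL.IH[OF bangL.prems]])
next
  case (bangP1 c2 D1 A1 P0 D2 C)
  have rule: "Fd False (plug c' (D1' @ ([F (Bang A1)] @ P0) @ D2')) D
      \<Longrightarrow> Fd False (plug c' (D1' @ (P0 @ [F (Bang A1)]) @ D2')) D" for c' D1' D2'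
    using Fd.bangP1[of False c' D1' A1 P0 D2' D] by simp
  have "Fd False (plug c (G1 @ plug c2 (D1 @ ([F (Bang A1)] @ P0) @ D2) @ G2)) D"
    using bangP1.IH[OF bangP1.prems] by simp
  from Fd_rule_in_plug[OF rule this] show ?case by simp
next
  case (bangP2 c2 D1 P0 A1 D2 C)
  have rule: "Fd False (plug c' (D1' @ (P0 @ [F (Bang A1)]) @ D2')) D
      \<Longrightarrow> Fd False (plug c' (D1' @ ([F (Bang A1)] @ P0) @ D2')) D" for c' D1' D2'
    using Fd.bangP2[of False c' D1' P0 A1 D2' D] by simp
  have "Fd False (plug c (G1 @ plug c2 (D1 @ (P0 @ [F (Bang A1)]) @ D2) @ G2)) D"
    using bangP2.IH[OF bangP2.prems] by simp
  from Fd_rule_in_plug[OF rule this] show ?case by simp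
next
  case (bangR As B)
  show ?case
    by (rule cut_right_principal[OF bangR.prems(1) Fd.bangR[OF bangR.hyps] _ bangR.prems(2)])
      (use bangR.hyps in auto)
next
  case (bangC As c2 H1 H2 H3 A)
  obtain c' L R where eq: "\<And>Y. plug c (G1 @ plug c2 ([] @ Y @ []) @ G2) = plug c' (L @ Y @ R)"
    using plug_in_plug[of c G1 c2 "[]" "[]" G2] by blast
  \<comment> \<open>\<open>!C\<close> needs its banged formulas in front, so they are moved past \<open>L\<close> and back\<close>
  from bangC.IH[OF bangC.prems]
  have "Fd False (plug c' ([] @ L @ bangs As @ (H1 @ [Br (bangs As @ H2)] @ H3 @ R))) D"
    using eq[of "bangs As @ H1 @ [Br (bangs As @ H2)] @ H3"] by simp
  from Fd_bangs_move_left[OF this]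
  have "Fd False (plug c' (bangs As @ (L @ H1) @ [Br (bangs As @ H2)] @ (H3 @ R))) D" by simp
  from Fd.bangC[OF bangC.hyps(1) this]
  have "Fd False (plug c' ([] @ bangs As @ L @ (H1 @ H2 @ H3 @ R))) D" by simp
  from Fd_bangs_move_right[OF this] show ?case using eq[of "bangs As @ H1 @ H2 @ H3"] by simp
next
  case (cutR P A c G1 G2 C)
  then show ?case by simp
qed

lemma all_cut_admissible: "cut_admissible A"
proof (induction A rule: measure_induct_rule[of size])
  case (less A)
  show ?case unfolding cut_admissible_def by (blast intro: cut_reduction less)
qed

lemma Fd_cut_elim: "Fd True X C \<Longrightarrow> Fd False X C"
proof (induction rule: Fd.induct)
  case (cutR P A c G1 G2 C)
  then show ?case using cut_admissibleD[OF all_cut_admissible] by blast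
qed (blast intro: Fd.intros)+

section \<open>Erasing stoups\<close>

definition list_of_mset :: "'a multiset \<Rightarrow> 'a list" where
  "list_of_mset z = (SOME L. mset L = z)"

lemma mset_list_of_mset [simp]: "mset (list_of_mset z) = z"
  unfolding list_of_mset_def by (rule someI_ex) (rule ex_mset)

text \<open>The order of the banged formulas, fixed arbitrarily by \<open>SOME\<close>, is immaterial
  because \<open>!P\<close> permutes them.\<close>
definition bangs_mset :: "fm multiset \<Rightarrow> tt list" where
  "bangs_mset z = bangs (list_of_mset z)"

lemma bangs_mset_empty [simp]: "bangs_mset {#} = []"
  by (metis bangs_mset_def bangs_simps(1) mset_list_of_mset mset_zero_iff)

lemma bangs_mset_single [simp]: "bangs_mset {#A#} = [F (Bang A)]"
  using mset_list_of_mset[of "{#A#}"] by (simp add: bangs_mset_def del: mset_list_of_mset)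

lemma bangs_mset_nonempty: "z \<noteq> {#} \<Longrightarrow> \<exists>As. As \<noteq> [] \<and> bangs_mset z = bangs As"
  by (metis bangs_mset_def mset.simps(1) mset_list_of_mset)

lemma Fd_bangs_mset_move:
  "Fd b (plug c (D1 @ bangs_mset z @ P @ D2)) C \<Longrightarrow> Fd b (plug c (D1 @ P @ bangs_mset z @ D2)) C"
  "Fd b (plug c (D1 @ P @ bangs_mset z @ D2)) C \<Longrightarrow> Fd b (plug c (D1 @ bangs_mset z @ P @ D2)) C"
  unfolding bangs_mset_def by (fact Fd_bangs_move_right Fd_bangs_move_left)+

lemma Fd_bangs_mset_perm:
  "mset As = z \<Longrightarrow> Fd b (plug c (D1 @ bangs As @ D2)) C \<Longrightarrow> Fd b (plug c (D1 @ bangs_mset z @ D2)) C"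
  "mset As = z \<Longrightarrow> Fd b (plug c (D1 @ bangs_mset z @ D2)) C \<Longrightarrow> Fd b (plug c (D1 @ bangs As @ D2)) C"
  using Fd_bangs_perm[of As "list_of_mset z"] Fd_bangs_perm[of "list_of_mset z" As]
  by (auto simp: bangs_mset_def)

lemma Fd_bangs_mset_add:
  "Fd b (plug c (D1 @ bangs_mset z1 @ bangs_mset z2 @ D2)) C
      \<Longrightarrow> Fd b (plug c (D1 @ bangs_mset (z1 + z2) @ D2)) C"
  using Fd_bangs_mset_perm(1)[of "list_of_mset z1 @ list_of_mset z2" "z1 + z2"]
  by (simp add: bangs_mset_def)

lemma Fd_bangs_mset_split:
  "Fd b (plug c (D1 @ bangs_mset (z1 + z2) @ D2)) C
      \<Longrightarrow> Fd b (plug c (D1 @ bangs_mset z1 @ bangs_mset z2 @ D2)) C"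
  using Fd_bangs_mset_perm(2)[of "list_of_mset z1 @ list_of_mset z2" "z1 + z2"]
  by (simp add: bangs_mset_def)

lemma Fd_bangs_mset_merge:
  "Fd b (plug c (bangs_mset z1 @ X1 @ bangs_mset z2 @ X2)) C
      \<Longrightarrow> Fd b (plug c (bangs_mset (z1 + z2) @ X1 @ X2)) C"
  using Fd_bangs_mset_move(2)[of b c "bangs_mset z1" X1 z2 X2 C]
    Fd_bangs_mset_add[of b c "[]" z1 z2 "X1 @ X2" C]
  by simp

primrec erase_tt :: "stt \<Rightarrow> tt" where
  "erase_tt (SF A) = F A"
| "erase_tt (SBr z G) = Br (bangs_mset z @ map erase_tt G)"

fun erase :: "mf \<Rightarrow> tt list" where
  "erase (z, G) = bangs_mset z @ map erase_tt G"

primrec erase_ctx :: "sctx \<Rightarrow> ctx" where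
  "erase_ctx SHole = Hole"
| "erase_ctx (SIn z G1 c G2) = In (bangs_mset z @ map erase_tt G1) (erase_ctx c) (map erase_tt G2)"

lemma erase_tt_SBr [simp]: "erase_tt (case_prod SBr S) = Br (erase S)"
  by (cases S) simp

lemma erase_splug: "erase (splug c z G) = plug (erase_ctx c) (bangs_mset z @ map erase_tt G)"
  by (induction c) simp_all

lemma erase_tt_emb [simp]: "erase_tt (emb t) = t"
  by (induction t) (simp_all add: map_idI)

lemma erase_emb: "erase ({#}, map emb X) = X"
  by (simp add: map_idI)

lemma Fd_erase_splug_rule:
  assumes "\<And>c D1 D2. Fd b (plug c (D1 @ map erase_tt N @ D2)) X
      \<Longrightarrow> Fd b (plug c (D1 @ map erase_tt N' @ D2)) X"
    and "Fd b (erase (splug c z (G1 @ N @ G2))) X"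
  shows "Fd b (erase (splug c z (G1 @ N' @ G2))) X"
  using assms(1)[of "erase_ctx c" "bangs_mset z @ map erase_tt G1" "map erase_tt G2"] assms(2)
  by (simp add: erase_splug)

lemma Md_imp_Fd_erase: "Md b S C \<Longrightarrow> Fd True (erase S) C"
proof (induction rule: Md.induct)
  case (ax A)
  then show ?case by (simp add: Fd.ax)
next
  case oneR
  then show ?case by (simp add: Fd.oneR)
next
  case (overL z1 G B c z2 D1 C D2 D)
  let ?c = "erase_ctx c" and ?e = "map erase_tt"
  have "Fd True (plug ?c ((bangs_mset z2 @ ?e D1) @ [F C] @ ?e D2)) D"
    using overL.IH(2) by (simp add: erase_splug)
  from Fd.overL[OF overL.IH(1)[simplified] this]
  have "Fd True (plug ?c
      (bangs_mset z2 @ (?e D1 @ [F (Over C B)]) @ bangs_mset z1 @ (?e G @ ?e D2))) D"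
    by simp
  from Fd_bangs_mset_merge[OF this] show ?case by (simp add: erase_splug add.commute)
next
  case (overR z G B C)
  then show ?case by (simp add: Fd.overR)
next
  case (underL z1 G A c z2 D1 C D2 D)
  let ?c = "erase_ctx c" and ?e = "map erase_tt"
  have "Fd True (plug ?c ((bangs_mset z2 @ ?e D1) @ [F C] @ ?e D2)) D"
    using underL.IH(2) by (simp add: erase_splug)
  from Fd.underL[OF underL.IH(1)[simplified] this]
  have "Fd True (plug ?c
      (bangs_mset z2 @ ?e D1 @ bangs_mset z1 @ (?e G @ [F (Under A C)] @ ?e D2))) D"
    by simp
  from Fd_bangs_mset_merge[OF this] show ?case by (simp add: erase_splug add.commute)
next
  case (underR z A G C)
  let ?e = "map erase_tt"
  from underR.IH have "Fd True (plug Hole ([] @ bangs_mset z @ [F A] @ ?e G)) C" by simp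
  from Fd_bangs_mset_move(1)[OF this] have "Fd True (F A # bangs_mset z @ ?e G) C" by simp
  from Fd.underR[OF this] show ?case by simp
next
  case (prodL c z D1 A B D2 D)
  show ?case by (rule Fd_erase_splug_rule[OF _ prodL.IH]) (use Fd.prodL in simp)
next
  case (prodR z1 D A z2 G B)
  let ?e = "map erase_tt"
  from Fd.prodR[OF prodR.IH(1) prodR.IH(2)]
  have "Fd True (plug Hole (bangs_mset z1 @ ?e D @ bangs_mset z2 @ ?e G)) (Prod A B)"
    by simp
  from Fd_bangs_mset_merge[OF this] show ?case by simp
next
  case (oneL c z D1 D2 A)
  have IH: "Fd True (erase (splug c z (D1 @ [] @ D2))) A" using oneL.IH by simp
  show ?case by (rule Fd_erase_splug_rule[OF _ IH]) (use Fd.oneL in simp)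
next
  case (joinL c z D1 A1 D2 C A2)
  show ?case
    using joinL.IH
      Fd.joinL[of True "erase_ctx c" "bangs_mset z @ map erase_tt D1" A1 "map erase_tt D2" C A2]
    by (simp add: erase_splug)
next
  case (joinR1 X A1 A2)
  then show ?case by (simp add: Fd.joinR1)
next
  case (joinR2 X A2 A1)
  then show ?case by (simp add: Fd.joinR2)
next
  case (meetL1 c z D1 A1 D2 C A2)
  show ?case by (rule Fd_erase_splug_rule[OF _ meetL1.IH]) (use Fd.meetL1 in simp)
next
  case (meetL2 c z D1 A2 D2 C A1)
  show ?case by (rule Fd_erase_splug_rule[OF _ meetL2.IH]) (use Fd.meetL2 in simp)
next
  case (meetR X A1 A2)
  then show ?case by (simp add: Fd.meetR)
next
  case (boxL c z D1 A D2 B)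
  show ?case by (rule Fd_erase_splug_rule[OF _ boxL.IH]) (use Fd.boxL in simp)
next
  case (boxR X A)
  then show ?case by (simp add: Fd.boxR)
next
  case (diamL c z D1 A D2 B)
  show ?case by (rule Fd_erase_splug_rule[OF _ diamL.IH]) (use Fd.diamL in simp)
next
  case (diamR X A)
  from Fd.diamR[OF diamR.IH] show ?case by simp
next
  case (bangL c z A G1 G2 B)
  let ?c = "erase_ctx c" and ?e = "map erase_tt"
  from bangL.IH have "Fd True (plug ?c ([] @ bangs_mset (z + {#A#}) @ ?e G1 @ ?e G2)) B"
    by (simp add: erase_splug)
  from Fd_bangs_mset_split[OF this]
  have "Fd True (plug ?c (bangs_mset z @ bangs_mset {#A#} @ ?e G1 @ ?e G2)) B"
    by simp
  from Fd_bangs_mset_move(1)[OF this] show ?case by (simp add: erase_splug)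
next
  case (bangP c z G1 A G2 B)
  let ?c = "erase_ctx c" and ?e = "map erase_tt"
  from bangP.IH have "Fd True (plug ?c ((bangs_mset z @ ?e G1) @ [F A] @ ?e G2)) B"
    by (simp add: erase_splug)
  from Fd.bangL[OF this]
  have "Fd True (plug ?c (bangs_mset z @ ?e G1 @ bangs_mset {#A#} @ ?e G2)) B"
    by simp
  from Fd_bangs_mset_move(2)[OF this]
  have "Fd True (plug ?c ([] @ bangs_mset z @ bangs_mset {#A#} @ ?e G1 @ ?e G2)) B"
    by simp
  from Fd_bangs_mset_add[OF this] show ?case by (simp add: erase_splug)
next
  case (bangR' z B)
  then obtain As where "As \<noteq> []" "bangs_mset z = bangs As" using bangs_mset_nonempty by blast
  with bangR'.IH show ?case by (simp add: Fd.bangR)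
next
  case (bangC' z2 c z1 G1 z' G2 G3 C)
  let ?c = "erase_ctx c" and ?e = "map erase_tt"
  obtain As where As: "As \<noteq> []" "bangs_mset z2 = bangs As" using bangs_mset_nonempty bangC'.hyps
    by blast
  from bangC'.IH have "Fd True (plug ?c ([] @ bangs_mset (z2 + z1) @
      (?e G1 @ [Br (bangs_mset (z2 + z') @ ?e G2)] @ ?e G3))) C"
    by (simp add: erase_splug add.commute)
  from Fd_bangs_mset_split[OF this]
  have "Fd True (plug (ctx_comp ?c (In (bangs_mset z2 @ bangs_mset z1 @ ?e G1) Hole (?e G3)))
      ([] @ bangs_mset (z2 + z') @ ?e G2)) C"
    by (simp add: plug_ctx_comp)
  from Fd_bangs_mset_split[OF this]
  have "Fd True (plug ?c
      (bangs As @ (bangs_mset z1 @ ?e G1) @ [Br (bangs As @ (bangs_mset z' @ ?e G2))] @ ?e G3)) C"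
    using As by (simp add: plug_ctx_comp)
  from Fd.bangC[OF As(1) this]
  have "Fd True (plug ?c
      (bangs_mset z2 @ bangs_mset z1 @ ?e G1 @ bangs_mset z' @ (?e G2 @ ?e G3))) C"
    using As by simp
  from Fd_bangs_mset_move(2)[of _ _ "bangs_mset z2 @ bangs_mset z1" "?e G1" z'] this
  have "Fd True (plug ?c
      ([] @ bangs_mset z2 @ bangs_mset z1 @ bangs_mset z' @ (?e G1 @ ?e G2 @ ?e G3))) C"
    by simp
  from Fd_bangs_mset_add[OF Fd_bangs_mset_add[OF this]]
  show ?case by (simp add: erase_splug ac_simps)
next
  case (cutR x P A c z G1 G2 C)
  let ?c = "erase_ctx c" and ?e = "map erase_tt"
  have "Fd True (plug ?c ((bangs_mset z @ ?e G1) @ [F A] @ ?e G2)) C"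
    using cutR.IH(2) by (simp add: erase_splug)
  from Fd.cutR[OF _ cutR.IH(1)[simplified] this]
  have "Fd True (plug ?c
      (bangs_mset z @ ?e G1 @ bangs_mset x @ (?e P @ ?e G2))) C"
    by simp
  from Fd_bangs_mset_merge[OF this] show ?case by (simp add: erase_splug add.commute)
qed

section \<open>Moving banged formulas into stoups\<close>

inductive stoupify :: "tt list \<Rightarrow> mf \<Rightarrow> bool" where
  Nil: "stoupify [] ({#}, [])"
| absorb: "stoupify T (z, G) \<Longrightarrow> stoupify (F (Bang A) # T) (z + {#A#}, G)"
| keep: "stoupify T (z, G) \<Longrightarrow> stoupify (F B # T) (z, SF B # G)"
| Br: "stoupify X (z', G') \<Longrightarrow> stoupify T (z, G) \<Longrightarrow> stoupify (Br X # T) (z, SBr z' G' # G)"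

inductive stoupify_ctx :: "ctx \<Rightarrow> sctx \<Rightarrow> bool" where
  Hole: "stoupify_ctx Hole SHole"
| In: "stoupify G1 (z1, G1') \<Longrightarrow> stoupify_ctx c c' \<Longrightarrow> stoupify G2 (z2, G2')
    \<Longrightarrow> stoupify_ctx (In G1 c G2) (SIn (z1 + z2) G1' c' G2')"

lemma stoupify_emb: "stoupify T ({#}, map emb T)"
proof (induction "size_list size T" arbitrary: T rule: less_induct)
  case less
  show ?case
  proof (cases T)
    case (Cons t T0)
    then show ?thesis using less by (cases t) (auto intro: stoupify.keep stoupify.Br)
  qed (simp add: stoupify.Nil)
qed

lemma stoupify_NilD: "stoupify [] S \<Longrightarrow> S = ({#}, [])"
  by (erule stoupify.cases) auto

lemma stoupify_F: "stoupify [F B] ({#}, [SF B])"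
  using stoupify.keep[OF stoupify.Nil] by simp

lemma stoupify_Bang: "stoupify [F (Bang A)] ({#A#}, [])"
  using stoupify.absorb[OF stoupify.Nil] by simp

lemma stoupify_Br_single: "stoupify X (z, G) \<Longrightarrow> stoupify [Br X] ({#}, [SBr z G])"
  using stoupify.Br[OF _ stoupify.Nil] by simp

lemma stoupify_FD: "stoupify [F B] S \<Longrightarrow> S = ({#}, [SF B]) \<or> (\<exists>A. B = Bang A \<and> S = ({#A#}, []))"
  by (erule stoupify.cases) (auto dest: stoupify_NilD)

lemma stoupify_F_non_Bang: "stoupify [F B] S \<Longrightarrow> (\<And>A. B \<noteq> Bang A) \<Longrightarrow> S = ({#}, [SF B])"
  using stoupify_FD by blast

lemma stoupify_BrD: "stoupify [Br X] S \<Longrightarrow> \<exists>z G. S = ({#}, [SBr z G]) \<and> stoupify X (z, G)"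
  by (erule stoupify.cases) (auto dest: stoupify_NilD)

lemma stoupify_append:
  "stoupify X (z1, G1) \<Longrightarrow> stoupify Y (z2, G2) \<Longrightarrow> stoupify (X @ Y) (z1 + z2, G1 @ G2)"
proof (induction X "(z1, G1)" arbitrary: z1 G1 rule: stoupify.induct)
  case Nil
  then show ?case by simp
next
  case (absorb T z G A)
  from stoupify.absorb[OF absorb.hyps(2)[OF absorb.prems]] show ?case by (simp add: ac_simps)
next
  case (keep T z G B)
  from stoupify.keep[OF keep.hyps(2)[OF keep.prems]] show ?case by simp
next
  case (Br X z' G' T z G)
  from stoupify.Br[OF Br.hyps(1) Br.hyps(4)[OF Br.prems]] show ?case by simp
qed

lemma stoupify_append_split:
  "stoupify (X @ Y) S
      \<Longrightarrow> \<exists>z1 G1 z2 G2. S = (z1 + z2, G1 @ G2) \<and> stoupify X (z1, G1) \<and> stoupify Y (z2, G2)"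
proof (induction X arbitrary: S)
  case Nil
  then show ?case by (cases S) (metis stoupify.Nil add_0 append_Nil)
next
  case (Cons t X)
  from Cons.prems have "stoupify (t # X @ Y) S" by simp
  then show ?case
  proof (cases rule: stoupify.cases)
    case (absorb z G A)
    with Cons.IH obtain z1 G1 z2 G2
      where "(z, G) = (z1 + z2, G1 @ G2)" "stoupify X (z1, G1)" "stoupify Y (z2, G2)"
      by blast
    moreover have "stoupify (t # X) (z1 + {#A#}, G1)"
      using stoupify.absorb[OF calculation(2)] absorb(1) by simp
    moreover have "S = ((z1 + {#A#}) + z2, G1 @ G2)" using absorb calculation(1)
      by (simp add: ac_simps)
    ultimately show ?thesis by blast
  next
    case (keep z G B)
    with Cons.IH obtain z1 G1 z2 G2
      where "(z, G) = (z1 + z2, G1 @ G2)" "stoupify X (z1, G1)" "stoupify Y (z2, G2)"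
      by blast
    moreover from this(2) have "stoupify (t # X) (z1, SF B # G1)" using keep
      by (simp add: stoupify.keep)
    moreover have "S = (z1 + z2, (SF B # G1) @ G2)" using keep calculation(1) by simp
    ultimately show ?thesis by blast
  next
    case (Br Z z' G' z G)
    with Cons.IH obtain z1 G1 z2 G2
      where "(z, G) = (z1 + z2, G1 @ G2)" "stoupify X (z1, G1)" "stoupify Y (z2, G2)"
      by blast
    moreover from this(2) have "stoupify (t # X) (z1, SBr z' G' # G1)" using Br
      by (simp add: stoupify.Br)
    moreover have "S = (z1 + z2, (SBr z' G' # G1) @ G2)" using Br calculation(1) by simp
    ultimately show ?thesis by blast
  qed
qed

lemma stoupify_appendE:
  assumes "stoupify (X @ Y) S"
  obtains z1 G1 z2 G2 where "S = (z1 + z2, G1 @ G2)" "stoupify X (z1, G1)" "stoupify Y (z2, G2)"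
  using stoupify_append_split[OF assms] by blast

lemma stoupify_plug: "stoupify_ctx c c' \<Longrightarrow> stoupify X (z, G) \<Longrightarrow> stoupify (plug c X) (splug c' z G)"
proof (induction arbitrary: X z G rule: stoupify_ctx.induct)
  case Hole
  then show ?case by simp
next
  case (In G1 z1 G1' c c' G2 z2 G2')
  obtain z' G' where eq: "splug c' z G = (z', G')" by fastforce
  with In.IH In.prems have "stoupify [Br (plug c X)] ({#}, [SBr z' G'])"
    by (metis stoupify_Br_single)
  from stoupify_append[OF In.hyps(1) stoupify_append[OF this In.hyps(3)]] show ?case
    using eq by simp
qed

lemma stoupify_plug_split:
  "stoupify (plug c X) S \<Longrightarrow> \<exists>c' z G. S = splug c' z G \<and> stoupify_ctx c c' \<and> stoupify X (z, G)"
proof (induction c arbitrary: S)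
  case Hole
  then have "S = splug SHole (fst S) (snd S)" "stoupify X (fst S, snd S)" by simp_all
  then show ?case using stoupify_ctx.Hole by blast
next
  case (In G1 c G2)
  from In.prems have "stoupify (G1 @ [Br (plug c X)] @ G2) S" by simp
  then obtain z1 Y1 zr Yr where S: "S = (z1 + zr, Y1 @ Yr)" and G1: "stoupify G1 (z1, Y1)"
    and rest: "stoupify ([Br (plug c X)] @ G2) (zr, Yr)"
    by (rule stoupify_appendE)
  from rest obtain zb Yb z2 Y2 where rest_eq: "(zr, Yr) = (zb + z2, Yb @ Y2)"
    and Br: "stoupify [Br (plug c X)] (zb, Yb)" and G2: "stoupify G2 (z2, Y2)"
    by (rule stoupify_appendE)
  from stoupify_BrD[OF Br] obtain z' G' where Br_eq: "(zb, Yb) = ({#}, [SBr z' G'])"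
    and "stoupify (plug c X) (z', G')" by blast
  with In.IH obtain c' z G where "(z', G') = splug c' z G" "stoupify_ctx c c'" "stoupify X (z, G)"
    by blast
  moreover from this(1) have "case_prod SBr (splug c' z G) = SBr z' G'" by (metis case_prod_conv)
  ultimately have "S = splug (SIn (z1 + z2) Y1 c' Y2) z G"
    and "stoupify_ctx (In G1 c G2) (SIn (z1 + z2) Y1 c' Y2)"
    using S rest_eq Br_eq G1 G2 by (auto intro: stoupify_ctx.In simp: ac_simps)
  then show ?case using \<open>stoupify X (z, G)\<close> by blast
qed

lemma stoupify_plug_appendE [consumes 1, case_names decomp]:
  assumes "stoupify (plug c (D1 @ M @ D2)) S"
  obtains c' z zm Ym Y1 Y2 where "S = splug c' (z + zm) (Y1 @ Ym @ Y2)" "stoupify M (zm, Ym)"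
    "\<And>Z zZ YZ. stoupify Z (zZ, YZ)
        \<Longrightarrow> stoupify (plug c (D1 @ Z @ D2)) (splug c' (z + zZ) (Y1 @ YZ @ Y2))"
proof -
  obtain c' z G where S: "S = splug c' z G" and c: "stoupify_ctx c c'"
    and DMD: "stoupify (D1 @ M @ D2) (z, G)"
    using stoupify_plug_split[OF assms] by blast
  from DMD obtain z1 Y1 zr Yr where zG: "(z, G) = (z1 + zr, Y1 @ Yr)" and D1: "stoupify D1 (z1, Y1)"
    and rest: "stoupify (M @ D2) (zr, Yr)"
    by (rule stoupify_appendE)
  from rest obtain zm Ym z2 Y2 where "(zr, Yr) = (zm + z2, Ym @ Y2)" and M: "stoupify M (zm, Ym)"
    and D2: "stoupify D2 (z2, Y2)"
    by (rule stoupify_appendE)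
  with zG S have "S = splug c' ((z1 + z2) + zm) (Y1 @ Ym @ Y2)" by (simp add: ac_simps)
  moreover have "stoupify (plug c (D1 @ Z @ D2)) (splug c' ((z1 + z2) + zZ) (Y1 @ YZ @ Y2))"
    if "stoupify Z (zZ, YZ)" for Z zZ YZ
    using stoupify_plug[OF c stoupify_append[OF D1 stoupify_append[OF that D2]]]
    by (simp add: ac_simps)
  ultimately show thesis using that M by blast
qed

lemma stoupify_plug_FE [consumes 1, case_names non_Bang decomp]:
  assumes "stoupify (plug c (D1 @ [F B] @ D2)) S" and "\<And>A. B \<noteq> Bang A"
  obtains c' z Y1 Y2 where "S = splug c' z (Y1 @ [SF B] @ Y2)"
    "\<And>Z zZ YZ. stoupify Z (zZ, YZ)
        \<Longrightarrow> stoupify (plug c (D1 @ Z @ D2)) (splug c' (z + zZ) (Y1 @ YZ @ Y2))"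
  using assms(1)
proof (rule stoupify_plug_appendE)
  fix c' z zm Ym Y1 Y2
  assume S: "S = splug c' (z + zm) (Y1 @ Ym @ Y2)" and M: "stoupify [F B] (zm, Ym)"
    and ctx: "\<And>Z zZ YZ. stoupify Z (zZ, YZ)
        \<Longrightarrow> stoupify (plug c (D1 @ Z @ D2)) (splug c' (z + zZ) (Y1 @ YZ @ Y2))"
  from stoupify_F_non_Bang[OF M assms(2)] S show thesis by (intro that[OF _ ctx]) simp
qed

lemma stoupify_bangs:
  "stoupify (bangs As) S
      \<Longrightarrow> \<exists>Ms Ns. S = (mset Ms, map (\<lambda>A. SF (Bang A)) Ns) \<and> mset As = mset Ms + mset Ns"
proof (induction As arbitrary: S)
  case Nil
  then show ?case by (auto dest: stoupify_NilD)
next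
  case (Cons B As)
  from Cons.prems have "stoupify (F (Bang B) # bangs As) S" by simp
  then show ?case
  proof (cases rule: stoupify.cases)
    case (absorb z G)
    with Cons.IH obtain Ms Ns
      where "(z, G) = (mset Ms, map (\<lambda>A. SF (Bang A)) Ns)" "mset As = mset Ms + mset Ns"
      by blast
    with absorb have "S = (mset (B # Ms), map (\<lambda>A. SF (Bang A)) Ns)"
      and "mset (B # As) = mset (B # Ms) + mset Ns"
      by (simp_all add: ac_simps)
    then show ?thesis by blast
  next
    case (keep z G)
    with Cons.IH obtain Ms Ns
      where "(z, G) = (mset Ms, map (\<lambda>A. SF (Bang A)) Ns)" "mset As = mset Ms + mset Ns"
      by blast
    with keep have "S = (mset Ms, map (\<lambda>A. SF (Bang A)) (B # Ns))"
      and "mset (B # As) = mset Ms + mset (B # Ns)"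
      by simp_all
    then show ?thesis by blast
  qed
qed

lemma stoupify_bangs_absorbed: "stoupify (bangs As) (mset As, [])"
proof (induction As)
  case (Cons A As)
  from stoupify.absorb[OF this, of A] show ?case by (simp add: ac_simps)
qed (simp add: stoupify.Nil)

lemma Md_bangL_list:
  "Md b (splug c (z + mset Ns) (G1 @ G2)) C
      \<Longrightarrow> Md b (splug c z (G1 @ map (\<lambda>A. SF (Bang A)) Ns @ G2)) C"
proof (induction Ns arbitrary: z G2)
  case (Cons A Ns)
  from Cons.prems have "Md b (splug c ((z + {#A#}) + mset Ns) (G1 @ G2)) C" by (simp add: ac_simps)
  from Cons.IH[OF this] have "Md b (splug c (z + {#A#}) (G1 @ (map (\<lambda>A. SF (Bang A)) Ns @ G2))) C" .
  from Md.bangL[OF this] show ?case by simp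
qed simp

lemma Fd_imp_Md_stoupify: "Fd False T C \<Longrightarrow> stoupify T S \<Longrightarrow> Md False S C"
proof (induction arbitrary: S rule: Fd.induct)
  case (ax A)
  from stoupify_FD[OF ax.prems] show ?case
  proof
    assume "S = ({#}, [SF A])"
    then show ?thesis by (simp add: Md.ax)
  next
    assume "\<exists>B. A = Bang B \<and> S = ({#B#}, [])"
    then obtain B where A: "A = Bang B" and S: "S = ({#B#}, [])" by blast
    have "Md False (splug SHole {#} ([] @ [SF B] @ [])) B" by (simp add: Md.ax)
    from Md.bangP[OF this] have "Md False ({#B#}, []) B" by simp
    from Md.bangR'[OF _ this] show ?thesis using A S by simp
  qed
next
  case oneR
  then show ?case by (auto dest: stoupify_NilD intro: Md.oneR)
next
  case (overL G B c D1 C D2 D)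
  from overL.prems have "stoupify (plug c (D1 @ ([F (Over C B)] @ G) @ D2)) S" by simp
  then show ?case
  proof (cases rule: stoupify_plug_appendE)
    case (decomp c' z zm Ym Y1 Y2)
    from decomp(2) obtain zo Yo zg Yg where M: "(zm, Ym) = (zo + zg, Yo @ Yg)"
      and Over: "stoupify [F (Over C B)] (zo, Yo)" and G: "stoupify G (zg, Yg)"
      by (rule stoupify_appendE)
    have "(zo, Yo) = ({#}, [SF (Over C B)])" using stoupify_F_non_Bang[OF Over] by simp
    moreover have "Md False (splug c' z (Y1 @ [SF C] @ Y2)) D"
      using overL.IH(2)[OF decomp(3)[OF stoupify_F]] by simp
    from Md.overL[OF overL.IH(1)[OF G] this] show ?thesis
      using decomp(1) M calculation by (simp add: ac_simps)
  qed
next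
  case (overR G B C)
  obtain z Y where S: "S = (z, Y)" by fastforce
  have "stoupify (G @ [F B]) (z + {#}, Y @ [SF B])"
    using stoupify_append[OF overR.prems[unfolded S] stoupify_F] .
  from Md.overR[OF overR.IH[OF this[simplified]]] show ?case using S by simp
next
  case (underL G A c D1 C D2 D)
  from underL.prems have "stoupify (plug c (D1 @ (G @ [F (Under A C)]) @ D2)) S" by simp
  then show ?case
  proof (cases rule: stoupify_plug_appendE)
    case (decomp c' z zm Ym Y1 Y2)
    from decomp(2) obtain zg Yg zu Yu where M: "(zm, Ym) = (zg + zu, Yg @ Yu)"
      and G: "stoupify G (zg, Yg)" and Under: "stoupify [F (Under A C)] (zu, Yu)"
      by (rule stoupify_appendE)
    have "(zu, Yu) = ({#}, [SF (Under A C)])" using stoupify_F_non_Bang[OF Under] by simp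
    moreover have "Md False (splug c' z (Y1 @ [SF C] @ Y2)) D"
      using underL.IH(2)[OF decomp(3)[OF stoupify_F]] by simp
    from Md.underL[OF underL.IH(1)[OF G] this] show ?thesis
      using decomp(1) M calculation by (simp add: ac_simps)
  qed
next
  case (underR A G C)
  obtain z Y where S: "S = (z, Y)" by fastforce
  have "stoupify (F A # G) (z, SF A # Y)" using stoupify.keep[OF underR.prems[unfolded S]] .
  from Md.underR[OF underR.IH[OF this]] show ?case using S by simp
next
  case (prodL c D1 A B D2 D)
  from prodL.prems show ?case
  proof (cases rule: stoupify_plug_FE)
    case (decomp c' z Y1 Y2)
    have "stoupify [F A, F B] ({#}, [SF A, SF B])" using stoupify_append[OF stoupify_F stoupify_F]
      by simp
    from prodL.IH[OF decomp(2)[OF this]] have "Md False (splug c' z (Y1 @ [SF A, SF B] @ Y2)) D"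
      by simp
    from Md.prodL[OF this] show ?thesis using decomp(1) by simp
  qed simp
next
  case (prodR D A G B)
  from prodR.prems obtain z1 Y1 z2 Y2 where "S = (z1 + z2, Y1 @ Y2)"
    and "stoupify D (z1, Y1)" and "stoupify G (z2, Y2)"
    by (rule stoupify_appendE)
  with Md.prodR[OF prodR.IH(1) prodR.IH(2)] show ?case by simp
next
  case (oneL c D1 D2 A)
  from oneL.prems show ?case
  proof (cases rule: stoupify_plug_FE)
    case (decomp c' z Y1 Y2)
    from decomp(2)[OF stoupify.Nil] have "stoupify (plug c (D1 @ D2)) (splug c' z (Y1 @ Y2))"
      by simp
    from oneL.IH[OF this] have "Md False (splug c' z (Y1 @ Y2)) A" .
    from Md.oneL[OF this] show ?thesis using decomp(1) by simp
  qed simp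
next
  case (joinL c D1 A1 D2 C A2)
  from joinL.prems show ?case
  proof (cases rule: stoupify_plug_FE)
    case (decomp c' z Y1 Y2)
    from joinL.IH(1)[OF decomp(2)[OF stoupify_F]] joinL.IH(2)[OF decomp(2)[OF stoupify_F]]
    have "Md False (splug c' z (Y1 @ [SF A1] @ Y2)) C" "Md False (splug c' z (Y1 @ [SF A2] @ Y2)) C"
      by simp_all
    from Md.joinL[OF this] show ?thesis using decomp(1) by simp
  qed simp
next
  case (joinR1 X A1 A2)
  then show ?case by (simp add: Md.joinR1)
next
  case (joinR2 X A2 A1)
  then show ?case by (simp add: Md.joinR2)
next
  case (meetL1 c D1 A1 D2 C A2)
  from meetL1.prems show ?case
  proof (cases rule: stoupify_plug_FE)
    case (decomp c' z Y1 Y2)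
    from meetL1.IH[OF decomp(2)[OF stoupify_F]] have "Md False (splug c' z (Y1 @ [SF A1] @ Y2)) C"
      by simp
    from Md.meetL1[OF this] show ?thesis using decomp(1) by simp
  qed simp
next
  case (meetL2 c D1 A2 D2 C A1)
  from meetL2.prems show ?case
  proof (cases rule: stoupify_plug_FE)
    case (decomp c' z Y1 Y2)
    from meetL2.IH[OF decomp(2)[OF stoupify_F]] have "Md False (splug c' z (Y1 @ [SF A2] @ Y2)) C"
      by simp
    from Md.meetL2[OF this] show ?thesis using decomp(1) by simp
  qed simp
next
  case (meetR X A1 A2)
  then show ?case by (simp add: Md.meetR)
next
  case (boxL c D1 A D2 B)
  from boxL.prems show ?case
  proof (cases rule: stoupify_plug_appendE)
    case (decomp c' z zm Ym Y1 Y2)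
    from stoupify_BrD[OF decomp(2)] obtain z' G' where M: "(zm, Ym) = ({#}, [SBr z' G'])"
      and Box: "stoupify [F (Box A)] (z', G')" by blast
    have "(z', G') = ({#}, [SF (Box A)])" using stoupify_F_non_Bang[OF Box] by simp
    moreover from boxL.IH[OF decomp(3)[OF stoupify_F]]
    have "Md False (splug c' z (Y1 @ [SF A] @ Y2)) B"
      by simp
    from Md.boxL[OF this] show ?thesis using decomp(1) M calculation by simp
  qed
next
  case (boxR X A)
  have "stoupify [Br X] ({#}, [case_prod SBr S])"
    using stoupify_Br_single[of X "fst S" "snd S"] boxR.prems by (simp add: case_prod_beta)
  from Md.boxR[OF boxR.IH[OF this]] show ?case .
next
  case (diamL c D1 A D2 B)
  from diamL.prems show ?case
  proof (cases rule: stoupify_plug_FE)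
    case (decomp c' z Y1 Y2)
    from diamL.IH[OF decomp(2)[OF stoupify_Br_single[OF stoupify_F]]]
    have "Md False (splug c' z (Y1 @ [SBr {#} [SF A]] @ Y2)) B" by simp
    from Md.diamL[OF this] show ?thesis using decomp(1) by simp
  qed simp
next
  case (diamR X A)
  from stoupify_BrD[OF diamR.prems] obtain z G where "S = ({#}, [SBr z G])" and "stoupify X (z, G)"
    by blast
  with Md.diamR[OF diamR.IH[OF this(2)]] show ?case by simp
next
  case (bangL c D1 A D2 C)
  from bangL.prems show ?case
  proof (cases rule: stoupify_plug_appendE)
    case (decomp c' z zm Ym Y1 Y2)
    from bangL.IH[OF decomp(3)[OF stoupify_F]] have "Md False (splug c' z (Y1 @ [SF A] @ Y2)) C"
      by simp
    from Md.bangP[OF this] have absorbed: "Md False (splug c' (z + {#A#}) (Y1 @ Y2)) C" .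
    from stoupify_FD[OF decomp(2)] show ?thesis
    proof
      assume "(zm, Ym) = ({#}, [SF (Bang A)])"
      with Md.bangL[OF absorbed] show ?thesis using decomp(1) by simp
    next
      assume "\<exists>B. Bang A = Bang B \<and> (zm, Ym) = ({#B#}, [])"
      with absorbed show ?thesis using decomp(1) by auto
    qed
  qed
next
  case (bangP1 c D1 A P D2 C)
  from bangP1.prems have "stoupify (plug c (D1 @ (P @ [F (Bang A)]) @ D2)) S" by simp
  then show ?case
  proof (cases rule: stoupify_plug_appendE)
    case (decomp c' z zm Ym Y1 Y2)
    from decomp(2) obtain zp Yp za Ya where M: "(zm, Ym) = (zp + za, Yp @ Ya)"
      and P: "stoupify P (zp, Yp)" and Bang: "stoupify [F (Bang A)] (za, Ya)"
      by (rule stoupify_appendE)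
    have "stoupify ([F (Bang A)] @ P) ({#A#} + zp, [] @ Yp)"
      by (rule stoupify_append[OF stoupify_Bang P])
    from decomp(3)[OF this]
    have "stoupify (plug c (D1 @ [F (Bang A)] @ P @ D2))
        (splug c' (z + ({#A#} + zp)) (Y1 @ Yp @ Y2))"
      by simp
    from bangP1.IH[OF this] have absorbed: "Md False (splug c' (z + zp + {#A#}) ((Y1 @ Yp) @ Y2)) C"
      by (simp add: ac_simps)
    from stoupify_FD[OF Bang] show ?thesis
    proof
      assume "(za, Ya) = ({#}, [SF (Bang A)])"
      with Md.bangL[OF absorbed] show ?thesis using decomp(1) M by (simp add: ac_simps)
    next
      assume "\<exists>B. Bang A = Bang B \<and> (za, Ya) = ({#B#}, [])"
      with absorbed show ?thesis using decomp(1) M by (auto simp: ac_simps)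
    qed
  qed
next
  case (bangP2 c D1 P A D2 C)
  from bangP2.prems have "stoupify (plug c (D1 @ ([F (Bang A)] @ P) @ D2)) S" by simp
  then show ?case
  proof (cases rule: stoupify_plug_appendE)
    case (decomp c' z zm Ym Y1 Y2)
    from decomp(2) obtain za Ya zp Yp where M: "(zm, Ym) = (za + zp, Ya @ Yp)"
      and Bang: "stoupify [F (Bang A)] (za, Ya)" and P: "stoupify P (zp, Yp)"
      by (rule stoupify_appendE)
    have "stoupify (P @ [F (Bang A)]) (zp + {#A#}, Yp @ [])"
      by (rule stoupify_append[OF P stoupify_Bang])
    from decomp(3)[OF this]
    have "stoupify (plug c (D1 @ P @ [F (Bang A)] @ D2))
        (splug c' (z + (zp + {#A#})) (Y1 @ Yp @ Y2))"
      by simp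
    from bangP2.IH[OF this] have absorbed: "Md False (splug c' (z + zp + {#A#}) (Y1 @ Yp @ Y2)) C"
      by (simp add: ac_simps)
    from stoupify_FD[OF Bang] show ?thesis
    proof
      assume "(za, Ya) = ({#}, [SF (Bang A)])"
      with Md.bangL[OF absorbed[unfolded append_Nil[symmetric]]] show ?thesis
        using decomp(1) M by (simp add: ac_simps)
    next
      assume "\<exists>B. Bang A = Bang B \<and> (za, Ya) = ({#B#}, [])"
      with absorbed show ?thesis using decomp(1) M by (auto simp: ac_simps)
    qed
  qed
next
  case (bangR As B)
  from stoupify_bangs[OF bangR.prems] obtain Ms Ns
    where S: "S = (mset Ms, map (\<lambda>A. SF (Bang A)) Ns)"
    and As: "mset As = mset Ms + mset Ns" by blast
  from bangR.IH[OF stoupify_bangs_absorbed] have "Md False (mset As, []) B" .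
  moreover have "mset As \<noteq> {#}" using bangR.hyps(1) by simp
  ultimately have "Md False (mset As, []) (Bang B)" by (simp add: Md.bangR')
  then have "Md False (splug SHole (mset Ms + mset Ns) ([] @ [])) (Bang B)" using As by simp
  from Md_bangL_list[OF this] show ?case using S by simp
next
  case (bangC As c G1 G2 G3 C)
  from stoupify_plug_split[OF bangC.prems] obtain c' z Y where S: "S = splug c' z Y"
    and c': "stoupify_ctx c c'" and AsG: "stoupify (bangs As @ G1 @ G2 @ G3) (z, Y)" by blast
  from AsG obtain za Ya zr Yr where e1: "(z, Y) = (za + zr, Ya @ Yr)"
    and As: "stoupify (bangs As) (za, Ya)" and G123: "stoupify (G1 @ G2 @ G3) (zr, Yr)"
    by (rule stoupify_appendE)
  from G123 obtain z1 Y1 zr2 Yr2 where e2: "(zr, Yr) = (z1 + zr2, Y1 @ Yr2)"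
    and G1: "stoupify G1 (z1, Y1)" and G23: "stoupify (G2 @ G3) (zr2, Yr2)"
    by (rule stoupify_appendE)
  from G23 obtain z2 Y2 z3 Y3 where e3: "(zr2, Yr2) = (z2 + z3, Y2 @ Y3)"
    and G2: "stoupify G2 (z2, Y2)" and G3: "stoupify G3 (z3, Y3)"
    by (rule stoupify_appendE)
  from stoupify_bangs[OF As] obtain Ms Ns where ea: "(za, Ya) = (mset Ms, map (\<lambda>A. SF (Bang A)) Ns)"
    and m: "mset As = mset Ms + mset Ns" by blast
  have "stoupify (bangs As @ G2) (mset As + z2, [] @ Y2)"
    by (rule stoupify_append[OF stoupify_bangs_absorbed G2])
  from stoupify_Br_single[OF this]
  have "stoupify [Br (bangs As @ G2)] ({#}, [SBr (mset As + z2) Y2])" by simp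
  from stoupify_append[OF stoupify_bangs_absorbed
      stoupify_append[OF G1 stoupify_append[OF this G3]]]
  have "stoupify (bangs As @ G1 @ [Br (bangs As @ G2)] @ G3)
      (mset As + (z1 + ({#} + z3)), [] @ Y1 @ [SBr (mset As + z2) Y2] @ Y3)" .
  from bangC.IH[OF stoupify_plug[OF c' this]]
  have "Md False (splug c' ((z1 + z3) + mset As) (Y1 @ [SBr (z2 + mset As) Y2] @ Y3)) C"
    by (simp add: ac_simps)
  from Md.bangC'[OF _ this] bangC.hyps(1)
  have "Md False (splug c' (z1 + z3 + mset As + z2) (Y1 @ Y2 @ Y3)) C" by simp
  then have "Md False (splug c' ((mset Ms + z1 + z2 + z3) + mset Ns) ([] @ (Y1 @ Y2 @ Y3))) C"
    using m by (simp add: ac_simps)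
  from Md_bangL_list[OF this] show ?case using S e1 e2 e3 ea by (simp add: ac_simps)
next
  case (cutR P A c G1 G2 C)
  then show ?case by simp
qed

theorem proposition2:
  fixes X :: "tt list" and C :: fm
  shows "(Fd False X C \<longleftrightarrow> Fd True X C)
       \<and> (Fd True X C \<longleftrightarrow> Md True ({#}, map emb X) C)
       \<and> (Md True ({#}, map emb X) C \<longleftrightarrow> Md False ({#}, map emb X) C)"
proof -
  have F_cut_free: "Fd False X C \<longleftrightarrow> Fd True X C"
    using Fd_cut_free_imp_Fd Fd_cut_elim by blast
  have F_to_M: "Fd False X C \<Longrightarrow> Md False ({#}, map emb X) C"
    using Fd_imp_Md_stoupify stoupify_emb by blast
  have M_to_F: "Md True ({#}, map emb X) C \<Longrightarrow> Fd True X C"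
    using Md_imp_Fd_erase erase_emb by metis
  show ?thesis
    using F_cut_free F_to_M M_to_F Md_cut_free_imp_Md by blast
qed

end
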